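(* Let $\mathbb{F}$ be a finite field of odd cardinality $q\ge 5$ and let $n\ge 1$. Then every matrix $A\in\mathbb{M}_n(\mathbb{F})$ can be written as $A=D+M$ where $D\in\mathbb{M}_n(\mathbb{F})$ is diagonalizable over $\mathbb{F}$ and $M\in\mathbb{M}_n(\mathbb{F})$ satisfies $M^2=0$. In particular $D^q=D$, so $A$ is the sum of a $q$-potent matrix and a square-zero matrix.
   Context: A matrix $X\in\mathbb{M}_n(\mathbb{F})$ is diagonalizable if there is an invertible $U\in\mathbb{M}_n(\mathbb{F})$ with $U^{-1}XU$ diagonal. A matrix $Z$ is $q$-potent if $Z^q=Z$; a matrix $M$ is square-zero if $M^2=0$. *)

theory Defs
  imports "Jordan_Normal_Form.Matrix"
begin

definition diagonalizable_mat :: "nat \<Rightarrow> 'a :: field mat \<Rightarrow> bool" where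
  "diagonalizable_mat n X \<longleftrightarrow>
     (\<exists>U V. U \<in> carrier_mat n n \<and> V \<in> carrier_mat n n \<and>
            U * V = 1\<^sub>m n \<and> V * U = 1\<^sub>m n \<and> diagonal_mat (V * X * U))"

end

theory Submission
  imports Defs "Jordan_Normal_Form.Determinant"
begin

text \<open>
  Split the space into cyclic blocks on which \<open>A\<close> acts by a companion matrix (or its
  transpose), peeling off one block at a time: the Krylov space of a vector of maximal
  Krylov dimension inside the range of an idempotent \<open>E\<close> commuting with \<open>A\<close> has an
  \<open>A\<close>-invariant complement in that range, obtained from a nonsingular Hankel matrix of a
  dual vector. A \<open>k \<times> k\<close> companion matrix is the sum of a square-zero matrix and a matrix
  annihilated by \<open>(x - a)(x + a)r(x)\<close> with \<open>r\<close> of degree at most two; since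
  \<open>q \<ge> 5\<close> is odd, \<open>a\<close> can be chosen so that all these roots are distinct, so the first
  summand is diagonalizable. The square-zero parts of different blocks multiply to zero,
  and every element of a finite field satisfies \<open>x^q = x\<close>, whence \<open>D^q = D\<close>.
\<close>

section \<open>Independent columns and column spans\<close>

definition cols_indep :: "'a::field mat \<Rightarrow> bool" where
  "cols_indep W \<longleftrightarrow> (\<forall>c \<in> carrier_vec (dim_col W). W *\<^sub>v c = 0\<^sub>v (dim_row W) \<longrightarrow> c = 0\<^sub>v (dim_col W))"

definition in_col_span :: "'a::field mat \<Rightarrow> 'a vec \<Rightarrow> bool" where
  "in_col_span W x \<longleftrightarrow> (\<exists>c \<in> carrier_vec (dim_col W). x = W *\<^sub>v c)"

lemma mult_unit_vec_eq_col:
  fixes M :: "'a::field mat"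
  assumes "M \<in> carrier_mat n k" "j < k"
  shows "M *\<^sub>v unit_vec k j = col M j"
  using assms by (intro eq_vecI, auto)

lemma finite_carrier_vec: "finite (carrier_vec n :: 'a::finite vec set)"
proof -
  have "carrier_vec n \<subseteq> vec_of_list ` {xs :: 'a list. set xs \<subseteq> UNIV \<and> length xs = n}"
  proof
    fix v :: "'a vec" assume "v \<in> carrier_vec n"
    thus "v \<in> vec_of_list ` {xs. set xs \<subseteq> UNIV \<and> length xs = n}"
      by (intro image_eqI[of _ _ "list_of_vec v"], auto simp: vec_list)
  qed
  moreover have "finite {xs :: 'a list. set xs \<subseteq> UNIV \<and> length xs = n}"
    by (rule finite_lists_length_eq, auto)
  ultimately show ?thesis by (meson finite_imageI finite_subset)
qed

lemma cols_indep_square_invertible: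
  fixes X :: "'a::field mat"
  assumes X: "X \<in> carrier_mat n n" and ind: "cols_indep X"
  shows "\<exists>Y. Y \<in> carrier_mat n n \<and> X * Y = 1\<^sub>m n \<and> Y * X = 1\<^sub>m n"
proof -
  have "det X \<noteq> 0"
    using ind X unfolding cols_indep_def det_0_iff_vec_prod_zero_field[OF X] by auto
  from det_non_zero_imp_unit[OF X this, of "()"]
  have "X \<in> Units (ring_mat TYPE('a) n ())" .
  thus ?thesis unfolding Units_def ring_mat_def by auto
qed

lemma cols_indep_le_dim:
  fixes W :: "'a::field mat"
  assumes W: "W \<in> carrier_mat n k" and ind: "cols_indep W"
  shows "k \<le> n"
proof (rule ccontr)
  assume "\<not> k \<le> n"
  hence kn: "n < k" by auto
  \<comment> \<open>pad \<open>W\<close> with zero rows to a square matrix; its last row is zero, so it is singular\<close>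
  define W' where "W' = mat k k (\<lambda>(i,j). if i < n then W $$ (i,j) else 0)"
  have W': "W' \<in> carrier_mat k k" unfolding W'_def by auto
  have rows: "row W' i = row W i" if "i < n" for i
    using that kn W unfolding W'_def by (intro eq_vecI, auto)
  have "det W' \<noteq> 0"
  proof
    assume "det W' = 0"
    then obtain c where c: "c \<in> carrier_vec k" "c \<noteq> 0\<^sub>v k" "W' *\<^sub>v c = 0\<^sub>v k"
      unfolding det_0_iff_vec_prod_zero_field[OF W'] by auto
    have "W *\<^sub>v c = 0\<^sub>v n"
    proof (intro eq_vecI)
      fix i assume "i < dim_vec (0\<^sub>v n :: 'a vec)"
      hence i: "i < n" by auto
      have "(W' *\<^sub>v c) $ i = 0" using c i kn by auto
      hence "row W' i \<bullet> c = 0" using i kn W' by auto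
      thus "(W *\<^sub>v c) $ i = 0\<^sub>v n $ i" using rows[OF i] i W by auto
    qed (insert W, auto)
    with ind c W show False unfolding cols_indep_def by auto
  qed
  moreover have "det W' = 0"
  proof -
    have WT: "transpose_mat W' \<in> carrier_mat k k" using W' by auto
    have "transpose_mat W' *\<^sub>v unit_vec k (k - 1) = col (transpose_mat W') (k - 1)"
      using WT kn by (intro mult_unit_vec_eq_col, auto)
    also have "\<dots> = 0\<^sub>v k" using kn unfolding W'_def by (intro eq_vecI, auto)
    finally have "det (transpose_mat W') = 0"
      unfolding det_0_iff_vec_prod_zero_field[OF WT] using kn
      by (intro exI[of _ "unit_vec k (k - 1)"], auto)
    thus ?thesis using det_transpose[OF W'] by auto
  qed
  ultimately show False by auto
qed

lemma unit_vecs_in_col_span_right_inverse: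
  fixes W :: "'a::field mat"
  assumes W: "W \<in> carrier_mat n k" and sp: "\<And>j. j < n \<Longrightarrow> in_col_span W (unit_vec n j)"
  shows "\<exists>X. X \<in> carrier_mat k n \<and> W * X = 1\<^sub>m n"
proof -
  have "\<forall>j. \<exists>c. j < n \<longrightarrow> c \<in> carrier_vec k \<and> unit_vec n j = W *\<^sub>v c"
    using sp W unfolding in_col_span_def by auto
  then obtain cf where cf: "\<And>j. j < n \<Longrightarrow> cf j \<in> carrier_vec k \<and> unit_vec n j = W *\<^sub>v cf j"
    by metis
  define X where "X = mat k n (\<lambda>(i,j). cf j $ i)"
  have X: "X \<in> carrier_mat k n" unfolding X_def by auto
  have colX: "col X j = cf j" if "j < n" for j
    using cf[OF that] that unfolding X_def by (intro eq_vecI, auto)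
  have "W * X = 1\<^sub>m n"
  proof (rule mat_col_eqI)
    fix j assume "j < dim_col (1\<^sub>m n :: 'a mat)"
    hence j: "j < n" by auto
    have "col (W * X) j = W *\<^sub>v col X j" using W X j by auto
    also have "\<dots> = unit_vec n j" using cf[OF j] colX[OF j] by auto
    finally show "col (W * X) j = col (1\<^sub>m n) j" using j by auto
  qed (insert W X, auto)
  thus ?thesis using X by auto
qed

lemma right_inverse_cols_indep:
  fixes W :: "'a::field mat"
  assumes W: "W \<in> carrier_mat n k" and X: "X \<in> carrier_mat k n" and WX: "W * X = 1\<^sub>m n"
  shows "cols_indep X"
  unfolding cols_indep_def
proof (intro ballI impI)
  fix c assume c: "c \<in> carrier_vec (dim_col X)" and "X *\<^sub>v c = 0\<^sub>v (dim_row X)"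
  hence c: "c \<in> carrier_vec n" and Xc: "X *\<^sub>v c = 0\<^sub>v k" using X by auto
  have "c = (W * X) *\<^sub>v c" using WX c by auto
  also have "\<dots> = W *\<^sub>v (X *\<^sub>v c)" using W X c by (rule assoc_mult_mat_vec)
  also have "\<dots> = 0\<^sub>v n" using Xc W by auto
  finally show "c = 0\<^sub>v (dim_col X)" using X by auto
qed

lemma spanning_cols_indep_invertible:
  fixes U :: "'a::field mat"
  assumes U: "U \<in> carrier_mat n m" and ind: "cols_indep U"
    and sp: "\<And>j. j < n \<Longrightarrow> in_col_span U (unit_vec n j)"
  shows "m = n" and "\<exists>X. X \<in> carrier_mat n n \<and> U * X = 1\<^sub>m n \<and> X * U = 1\<^sub>m n"
proof -
  obtain X where X: "X \<in> carrier_mat m n" "U * X = 1\<^sub>m n"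
    using unit_vecs_in_col_span_right_inverse[OF U sp] by blast
  have "n \<le> m" using cols_indep_le_dim[OF X(1) right_inverse_cols_indep[OF U X]] .
  with cols_indep_le_dim[OF U ind] show mn: "m = n" by simp
  have "U \<in> carrier_mat n n" "X \<in> carrier_mat n n" using U X(1) mn by auto
  thus "\<exists>X. X \<in> carrier_mat n n \<and> U * X = 1\<^sub>m n \<and> X * U = 1\<^sub>m n"
    using X(2) mat_mult_left_right_inverse by blast
qed

lemma mat_of_cols_snoc_mult_vec:
  fixes xs :: "'a::field vec list"
  assumes xs: "set xs \<subseteq> carrier_vec n" and x: "x \<in> carrier_vec n"
    and c: "c \<in> carrier_vec (Suc (length xs))"
  shows "mat_of_cols n (xs @ [x]) *\<^sub>v c
       = mat_of_cols n xs *\<^sub>v vec (length xs) (\<lambda>i. c $ i) + c $ (length xs) \<cdot>\<^sub>v x"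
proof (rule eq_vecI)
  fix i assume "i < dim_vec (mat_of_cols n xs *\<^sub>v vec (length xs) (\<lambda>i. c $ i) + c $ (length xs) \<cdot>\<^sub>v x)"
  hence i: "i < n" using x by auto
  let ?m = "length xs"
  have "(mat_of_cols n (xs @ [x]) *\<^sub>v c) $ i = (\<Sum>j\<in>{0..<Suc ?m}. (xs @ [x]) ! j $ i * c $ j)"
    using i c by (auto simp: scalar_prod_def mat_of_cols_def)
  also have "\<dots> = (\<Sum>j\<in>{0..<?m}. (xs @ [x]) ! j $ i * c $ j) + x $ i * c $ ?m"
    by (simp add: nth_append)
  also have "(\<Sum>j\<in>{0..<?m}. (xs @ [x]) ! j $ i * c $ j) = (\<Sum>j\<in>{0..<?m}. xs ! j $ i * c $ j)"
    by (rule sum.cong, auto simp: nth_append)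
  also have "\<dots> = (mat_of_cols n xs *\<^sub>v vec (length xs) (\<lambda>i. c $ i)) $ i"
    using i by (auto simp: scalar_prod_def mat_of_cols_def intro: sum.cong)
  finally show "(mat_of_cols n (xs @ [x]) *\<^sub>v c) $ i =
    (mat_of_cols n xs *\<^sub>v vec (length xs) (\<lambda>i. c $ i) + c $ (length xs) \<cdot>\<^sub>v x) $ i"
    using i x by (auto simp: mult.commute)
qed (insert x, auto)

lemma mat_of_cols_append_mult_vec:
  fixes xs :: "'a::field vec list"
  assumes c: "c \<in> carrier_vec (length xs)"
  shows "mat_of_cols n (xs @ ys) *\<^sub>v vec (length xs + length ys) (\<lambda>i. if i < length xs then c $ i else 0)
    = mat_of_cols n xs *\<^sub>v c"
proof (rule eq_vecI)
  let ?d = "vec (length xs + length ys) (\<lambda>i. if i < length xs then c $ i else 0)"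
  fix i assume "i < dim_vec (mat_of_cols n xs *\<^sub>v c)"
  hence i: "i < n" by auto
  have "(mat_of_cols n (xs @ ys) *\<^sub>v ?d) $ i = (\<Sum>j\<in>{0..<length xs + length ys}. (xs @ ys) ! j $ i * ?d $ j)"
    using i by (auto simp: scalar_prod_def mat_of_cols_def)
  also have "\<dots> = (\<Sum>j\<in>{0..<length xs}. (xs @ ys) ! j $ i * ?d $ j)"
    by (rule sum.mono_neutral_right, auto)
  also have "\<dots> = (\<Sum>j\<in>{0..<length xs}. xs ! j $ i * c $ j)"
    by (rule sum.cong, auto simp: nth_append)
  also have "\<dots> = (mat_of_cols n xs *\<^sub>v c) $ i"
    using i c by (auto simp: scalar_prod_def mat_of_cols_def intro: sum.cong)
  finally show "(mat_of_cols n (xs @ ys) *\<^sub>v ?d) $ i = (mat_of_cols n xs *\<^sub>v c) $ i" .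
qed auto

lemma in_col_span_col:
  fixes xs :: "'a::field vec list"
  assumes xs: "set xs \<subseteq> carrier_vec n" and j: "j < length xs"
  shows "in_col_span (mat_of_cols n xs) (xs ! j)"
  unfolding in_col_span_def
proof (intro bexI[of _ "unit_vec (length xs) j"])
  have "xs ! j \<in> carrier_vec n" using xs nth_mem[OF j] by auto
  thus "xs ! j = mat_of_cols n xs *\<^sub>v unit_vec (length xs) j"
    using j by (simp add: mult_unit_vec_eq_col[of _ n "length xs"] col_mat_of_cols)
qed auto

lemma in_col_span_zero: "in_col_span (W :: 'a::field mat) (0\<^sub>v (dim_row W))"
  unfolding in_col_span_def by (intro bexI[of _ "0\<^sub>v (dim_col W)"], auto)

lemma in_col_span_add:
  fixes W :: "'a::field mat"
  assumes "in_col_span W x" "in_col_span W y"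
  shows "in_col_span W (x + y)"
proof -
  from assms obtain c d where c: "c \<in> carrier_vec (dim_col W)" "x = W *\<^sub>v c"
    and d: "d \<in> carrier_vec (dim_col W)" "y = W *\<^sub>v d" unfolding in_col_span_def by auto
  have "W *\<^sub>v (c + d) = W *\<^sub>v c + W *\<^sub>v d"
    using c d by (intro mult_add_distrib_mat_vec[of _ "dim_row W" "dim_col W"], auto)
  thus ?thesis unfolding in_col_span_def using c d by (intro bexI[of _ "c + d"], auto)
qed

lemma in_col_span_smult:
  fixes W :: "'a::field mat"
  assumes "in_col_span W x"
  shows "in_col_span W (a \<cdot>\<^sub>v x)"
proof -
  from assms obtain c where c: "c \<in> carrier_vec (dim_col W)" "x = W *\<^sub>v c"
    unfolding in_col_span_def by auto
  have "W *\<^sub>v (a \<cdot>\<^sub>v c) = a \<cdot>\<^sub>v (W *\<^sub>v c)"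
    using c by (intro mult_mat_vec[of _ "dim_row W" "dim_col W"], auto)
  thus ?thesis unfolding in_col_span_def using c by (intro bexI[of _ "a \<cdot>\<^sub>v c"], auto)
qed

lemma in_col_span_append:
  fixes xs :: "'a::field vec list"
  assumes "in_col_span (mat_of_cols n xs) y"
  shows "in_col_span (mat_of_cols n (xs @ ys)) y"
proof -
  from assms obtain c where c: "c \<in> carrier_vec (length xs)" "y = mat_of_cols n xs *\<^sub>v c"
    unfolding in_col_span_def by auto
  show ?thesis unfolding in_col_span_def using c mat_of_cols_append_mult_vec[OF c(1), of n ys]
    by (intro bexI[of _ "vec (length xs + length ys) (\<lambda>i. if i < length xs then c $ i else 0)"], auto)
qed

lemma cols_indep_Nil: "cols_indep (mat_of_cols n ([] :: 'a::field vec list))"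
  unfolding cols_indep_def by (auto intro!: eq_vecI)

lemma cols_indep_snoc:
  fixes xs :: "'a::field vec list"
  assumes xs: "set xs \<subseteq> carrier_vec n" and x: "x \<in> carrier_vec n"
    and ind: "cols_indep (mat_of_cols n xs)" and nsp: "\<not> in_col_span (mat_of_cols n xs) x"
  shows "cols_indep (mat_of_cols n (xs @ [x]))"
  unfolding cols_indep_def
proof (intro ballI impI)
  fix c assume c: "c \<in> carrier_vec (dim_col (mat_of_cols n (xs @ [x])))"
    and eq: "mat_of_cols n (xs @ [x]) *\<^sub>v c = 0\<^sub>v (dim_row (mat_of_cols n (xs @ [x])))"
  let ?m = "length xs"
  let ?c' = "vec ?m (\<lambda>i. c $ i)"
  have c: "c \<in> carrier_vec (Suc ?m)" using c by auto
  have eq: "mat_of_cols n xs *\<^sub>v ?c' + c $ ?m \<cdot>\<^sub>v x = 0\<^sub>v n"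
    using eq mat_of_cols_snoc_mult_vec[OF xs x c] by auto
  have cm: "c $ ?m = 0"
  proof (rule ccontr)
    assume nz: "c $ ?m \<noteq> 0"
    have "x = (- 1 / c $ ?m) \<cdot>\<^sub>v (mat_of_cols n xs *\<^sub>v ?c')"
    proof (rule eq_vecI)
      fix i assume "i < dim_vec ((- 1 / c $ ?m) \<cdot>\<^sub>v (mat_of_cols n xs *\<^sub>v ?c'))"
      hence i: "i < n" by auto
      have "(mat_of_cols n xs *\<^sub>v ?c') $ i + c $ ?m * x $ i = 0"
        using arg_cong[OF eq, of "\<lambda>v. v $ i"] i x by auto
      thus "x $ i = ((- 1 / c $ ?m) \<cdot>\<^sub>v (mat_of_cols n xs *\<^sub>v ?c')) $ i"
        using i nz by (auto simp: field_simps eq_neg_iff_add_eq_0)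
    qed (insert x, auto)
    hence "in_col_span (mat_of_cols n xs) x"
      by (metis in_col_span_smult[of "mat_of_cols n xs" _ "- 1 / c $ ?m"] in_col_span_def
          mat_of_cols_carrier(3) vec_carrier)
    with nsp show False by auto
  qed
  have "c $ ?m \<cdot>\<^sub>v x = 0\<^sub>v n" using cm x by auto
  moreover have "mat_of_cols n xs *\<^sub>v ?c' \<in> carrier_vec n" unfolding carrier_vec_def by simp
  ultimately have "mat_of_cols n xs *\<^sub>v ?c' = 0\<^sub>v n" using eq by auto
  hence "?c' = 0\<^sub>v ?m" using ind unfolding cols_indep_def by auto
  hence "c $ i = 0" if "i < ?m" for i
  proof -
    have "?c' $ i = 0\<^sub>v ?m $ i" using \<open>?c' = 0\<^sub>v ?m\<close> by simp
    thus ?thesis using that by simp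
  qed
  with cm have "c $ i = 0" if "i < Suc ?m" for i using that less_Suc_eq by auto
  thus "c = 0\<^sub>v (dim_col (mat_of_cols n (xs @ [x])))" using c by (intro eq_vecI, auto)
qed

lemma cols_indep_prefix:
  fixes xs :: "'a::field vec list"
  assumes ind: "cols_indep (mat_of_cols n (xs @ ys))"
  shows "cols_indep (mat_of_cols n xs)"
  unfolding cols_indep_def
proof (intro ballI impI)
  fix c assume c: "c \<in> carrier_vec (dim_col (mat_of_cols n xs))"
    and eq: "mat_of_cols n xs *\<^sub>v c = 0\<^sub>v (dim_row (mat_of_cols n xs))"
  let ?d = "vec (length xs + length ys) (\<lambda>i. if i < length xs then c $ i else 0)"
  have c: "c \<in> carrier_vec (length xs)" using c by auto
  have "mat_of_cols n (xs @ ys) *\<^sub>v ?d = 0\<^sub>v n" using mat_of_cols_append_mult_vec[OF c, of n ys] eq by auto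
  hence "?d = 0\<^sub>v (length xs + length ys)" using ind unfolding cols_indep_def by auto
  hence "c $ i = 0" if "i < length xs" for i
  proof -
    have "?d $ i = 0\<^sub>v (length xs + length ys) $ i" using \<open>?d = _\<close> by simp
    thus ?thesis using that by simp
  qed
  thus "c = 0\<^sub>v (dim_col (mat_of_cols n xs))" using c by (intro eq_vecI, auto)
qed

lemma in_col_span_snoc_not_indep:
  fixes xs :: "'a::field vec list"
  assumes xs: "set xs \<subseteq> carrier_vec n" and x: "x \<in> carrier_vec n"
    and sp: "in_col_span (mat_of_cols n xs) x"
  shows "\<not> cols_indep (mat_of_cols n (xs @ [x]))"
proof
  assume ind: "cols_indep (mat_of_cols n (xs @ [x]))"
  from sp obtain c where c: "c \<in> carrier_vec (length xs)" "x = mat_of_cols n xs *\<^sub>v c"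
    unfolding in_col_span_def by auto
  let ?d = "vec (Suc (length xs)) (\<lambda>i. if i < length xs then c $ i else - 1)"
  have d: "?d \<in> carrier_vec (Suc (length xs))" by auto
  have "vec (length xs) (\<lambda>i. ?d $ i) = c" using c by (intro eq_vecI, auto)
  hence "mat_of_cols n (xs @ [x]) *\<^sub>v ?d = x + (- 1) \<cdot>\<^sub>v x"
    using mat_of_cols_snoc_mult_vec[OF xs x d] c by auto
  also have "\<dots> = 0\<^sub>v n" using x by (intro eq_vecI, auto)
  finally have "?d = 0\<^sub>v (Suc (length xs))" using ind d unfolding cols_indep_def by auto
  hence "?d $ length xs = 0" by (metis index_zero_vec(1) lessI)
  thus False by simp
qed

lemma cols_indep_extend_spanning:
  fixes ws :: "'a::field vec list"
  assumes "set bs0 \<subseteq> carrier_vec n" "cols_indep (mat_of_cols n bs0)" "set ws \<subseteq> carrier_vec n"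
  shows "\<exists>bs. set bs \<subseteq> set ws \<and> cols_indep (mat_of_cols n (bs0 @ bs)) \<and>
     (\<forall>w \<in> set ws \<union> set bs0. in_col_span (mat_of_cols n (bs0 @ bs)) w)"
  using assms
proof (induction ws arbitrary: bs0)
  case Nil
  have "in_col_span (mat_of_cols n bs0) w" if "w \<in> set bs0" for w
    using that in_col_span_col[OF Nil(1)] by (metis in_set_conv_nth)
  thus ?case using Nil by (intro exI[of _ "[]"], auto)
next
  case (Cons w ws)
  show ?case
  proof (cases "in_col_span (mat_of_cols n bs0) w")
    case True
    from Cons.IH[OF Cons.prems(1,2)] Cons.prems(3) obtain bs where
      bs: "set bs \<subseteq> set ws" "cols_indep (mat_of_cols n (bs0 @ bs))"
      "\<forall>w \<in> set ws \<union> set bs0. in_col_span (mat_of_cols n (bs0 @ bs)) w" by auto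
    thus ?thesis using in_col_span_append[OF True, of bs] by (intro exI[of _ bs], auto)
  next
    case False
    have w: "w \<in> carrier_vec n" using Cons.prems(3) by auto
    have ind: "cols_indep (mat_of_cols n (bs0 @ [w]))"
      by (rule cols_indep_snoc[OF Cons.prems(1) w Cons.prems(2) False])
    from Cons.IH[OF _ ind] Cons.prems w obtain bs where
      bs: "set bs \<subseteq> set ws" "cols_indep (mat_of_cols n ((bs0 @ [w]) @ bs))"
      "\<forall>x \<in> set ws \<union> set (bs0 @ [w]). in_col_span (mat_of_cols n ((bs0 @ [w]) @ bs)) x" by auto
    thus ?thesis by (intro exI[of _ "w # bs"], auto)
  qed
qed

lemma cols_indep_dual_vec:
  fixes bs :: "'a::field vec list"
  assumes bs: "set bs \<subseteq> carrier_vec n" and ind: "cols_indep (mat_of_cols n bs)"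
    and j: "j < length bs"
  shows "\<exists>f \<in> carrier_vec n. \<forall>i < length bs. f \<bullet> bs ! i = (if i = j then 1 else 0)"
proof -
  let ?us = "map (unit_vec n) [0..<n]"
  have "set ?us \<subseteq> carrier_vec n" by auto
  then obtain cs where cs: "set cs \<subseteq> set ?us" "cols_indep (mat_of_cols n (bs @ cs))"
    "\<forall>w \<in> set ?us \<union> set bs. in_col_span (mat_of_cols n (bs @ cs)) w"
    using cols_indep_extend_spanning[OF bs ind] by blast
  define P where "P = mat_of_cols n (bs @ cs)"
  have P: "P \<in> carrier_mat n (length (bs @ cs))" unfolding P_def by (rule mat_of_cols_carrier)
  have sp: "in_col_span P (unit_vec n i)" if "i < n" for i
    using cs(3) that unfolding P_def by auto
  have len: "length (bs @ cs) = n"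
    using spanning_cols_indep_invertible(1)[OF P cs(2)[folded P_def] sp] .
  obtain X where X: "X \<in> carrier_mat n n" "X * P = 1\<^sub>m n"
    using spanning_cols_indep_invertible(2)[OF P cs(2)[folded P_def] sp] by blast
  have "row X j \<bullet> bs ! i = (if i = j then 1 else 0)" if i: "i < length bs" for i
  proof -
    have ij: "i < n" "j < n" using i j len by auto
    have "col P i = bs ! i" unfolding P_def using i bs by (simp add: col_mat_of_cols nth_append subsetD)
    hence "(X * P) $$ (j, i) = row X j \<bullet> bs ! i" using X(1) P ij len by simp
    thus ?thesis using X(2) ij by auto
  qed
  moreover have "row X j \<in> carrier_vec n" using X(1) by (auto intro!: carrier_vecI)
  ultimately show ?thesis by blast
qed

section \<open>Krylov matrices and cyclic blocks\<close>

definition krylov :: "'a::field mat \<Rightarrow> 'a vec \<Rightarrow> nat \<Rightarrow> 'a vec" where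
  "krylov A v j = ((\<lambda>x. A *\<^sub>v x) ^^ j) v"

definition krylov_mat :: "nat \<Rightarrow> 'a::field mat \<Rightarrow> 'a vec \<Rightarrow> nat \<Rightarrow> 'a mat" where
  "krylov_mat n A v d = mat_of_cols n (map (krylov A v) [0..<d])"

definition krylov_dim :: "nat \<Rightarrow> 'a::field mat \<Rightarrow> 'a vec \<Rightarrow> nat" where
  "krylov_dim n A v = (LEAST d. in_col_span (krylov_mat n A v d) (krylov A v d))"

definition companion_mat :: "nat \<Rightarrow> 'a::field vec \<Rightarrow> 'a mat" where
  "companion_mat k cs = mat k k (\<lambda>(i,j). if j = k - 1 then cs $ i else if i = j + 1 then 1 else 0)"

lemma companion_mat_carrier[simp]: "companion_mat k cs \<in> carrier_mat k k"
  unfolding companion_mat_def by simp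

lemma krylov_0[simp]: "krylov A v 0 = v"
  unfolding krylov_def by simp

lemma krylov_Suc: "krylov A v (Suc j) = A *\<^sub>v krylov A v j"
  unfolding krylov_def by simp

lemma krylov_carrier[simp]: "A \<in> carrier_mat n n \<Longrightarrow> v \<in> carrier_vec n \<Longrightarrow> krylov A v j \<in> carrier_vec n"
  by (induction j, auto simp: krylov_Suc)

lemma krylov_mat_carrier[simp]: "krylov_mat n A v d \<in> carrier_mat n d"
  unfolding krylov_mat_def by auto

lemma krylov_mat_dims[simp]: "dim_row (krylov_mat n A v d) = n" "dim_col (krylov_mat n A v d) = d"
  unfolding krylov_mat_def by auto

lemma col_krylov_mat:
  assumes "j < d" "A \<in> carrier_mat n n" "v \<in> carrier_vec n"
  shows "col (krylov_mat n A v d) j = krylov A v j"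
  using krylov_carrier[OF assms(2,3), of j] assms(1) unfolding krylov_mat_def
  by (intro eq_vecI, auto simp: mat_of_cols_def)

lemma krylov_mat_indep:
  fixes A :: "'a::field mat"
  assumes A: "A \<in> carrier_mat n n" and v: "v \<in> carrier_vec n"
    and h: "\<And>j. j < d \<Longrightarrow> \<not> in_col_span (krylov_mat n A v j) (krylov A v j)"
  shows "cols_indep (krylov_mat n A v d)"
  using h
proof (induction d)
  case 0
  show ?case unfolding cols_indep_def krylov_mat_def by (auto intro!: eq_vecI)
next
  case (Suc d)
  have ind: "cols_indep (krylov_mat n A v d)" using Suc by auto
  have ns: "\<not> in_col_span (krylov_mat n A v d) (krylov A v d)" using Suc.prems by auto
  show ?case unfolding krylov_mat_def
    by (simp, rule cols_indep_snoc, insert A v ind ns, auto simp: krylov_mat_def)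
qed

lemma krylov_dim_in_col_span:
  fixes A :: "'a::field mat"
  assumes A: "A \<in> carrier_mat n n" and v: "v \<in> carrier_vec n"
  shows "in_col_span (krylov_mat n A v (krylov_dim n A v)) (krylov A v (krylov_dim n A v))"
proof -
  have "\<not> cols_indep (krylov_mat n A v (Suc n))"
    using cols_indep_le_dim[OF krylov_mat_carrier[of n A v "Suc n"]] by auto
  then obtain j where "in_col_span (krylov_mat n A v j) (krylov A v j)"
    using krylov_mat_indep[OF A v] by blast
  thus ?thesis unfolding krylov_dim_def by (rule LeastI)
qed

lemma krylov_dim_indep:
  fixes A :: "'a::field mat"
  assumes A: "A \<in> carrier_mat n n" and v: "v \<in> carrier_vec n"
  shows "cols_indep (krylov_mat n A v (krylov_dim n A v))"
  by (rule krylov_mat_indep[OF A v], unfold krylov_dim_def, rule not_less_Least)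

lemma krylov_dim_pos:
  fixes A :: "'a::field mat"
  assumes A: "A \<in> carrier_mat n n" and v: "v \<in> carrier_vec n" and nz: "v \<noteq> 0\<^sub>v n"
  shows "1 \<le> krylov_dim n A v"
proof (rule ccontr)
  assume "\<not> 1 \<le> krylov_dim n A v"
  hence "krylov_dim n A v = 0" by auto
  with krylov_dim_in_col_span[OF A v] have "in_col_span (krylov_mat n A v 0) v" by auto
  then obtain c where "c \<in> carrier_vec 0" "v = krylov_mat n A v 0 *\<^sub>v c"
    unfolding in_col_span_def using krylov_mat_carrier[of n A v 0] by auto
  hence "v = 0\<^sub>v n" by (intro eq_vecI, auto simp: krylov_mat_def scalar_prod_def)
  with nz show False by auto
qed

lemma krylov_dim_ge:
  fixes A :: "'a::field mat"
  assumes A: "A \<in> carrier_mat n n" and v: "v \<in> carrier_vec n"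
    and ind: "cols_indep (krylov_mat n A v k)"
  shows "k \<le> krylov_dim n A v"
proof (rule ccontr)
  let ?d = "krylov_dim n A v"
  assume "\<not> k \<le> ?d"
  then obtain r where r: "k = Suc ?d + r" using le_Suc_ex by (metis not_less_eq_eq)
  have "[0..<k] = [0..<Suc ?d] @ [Suc ?d..<k]" unfolding r by (rule upt_add_eq_append, simp)
  hence "map (krylov A v) [0..<k]
      = (map (krylov A v) [0..<?d] @ [krylov A v ?d]) @ map (krylov A v) [Suc ?d..<k]" by simp
  hence "cols_indep (mat_of_cols n (map (krylov A v) [0..<?d] @ [krylov A v ?d]))"
    using ind cols_indep_prefix unfolding krylov_mat_def by metis
  moreover have "\<not> cols_indep (mat_of_cols n (map (krylov A v) [0..<?d] @ [krylov A v ?d]))"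
    by (rule in_col_span_snoc_not_indep, insert A v krylov_dim_in_col_span[OF A v],
        auto simp: krylov_mat_def)
  ultimately show False by auto
qed

lemma krylov_mat_companion:
  fixes A :: "'a::field mat"
  assumes A: "A \<in> carrier_mat n n" and v: "v \<in> carrier_vec n"
    and cs: "cs \<in> carrier_vec k" and k: "1 \<le> k"
    and last: "krylov A v k = krylov_mat n A v k *\<^sub>v cs"
  shows "A * krylov_mat n A v k = krylov_mat n A v k * companion_mat k cs"
proof (rule mat_col_eqI)
  fix j assume "j < dim_col (krylov_mat n A v k * companion_mat k cs)"
  hence j: "j < k" by (auto simp: companion_mat_def)
  have "col (A * krylov_mat n A v k) j = A *\<^sub>v krylov A v j"
    using col_mult2[OF A krylov_mat_carrier j] col_krylov_mat[OF j A v] by simp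
  also have "\<dots> = krylov A v (Suc j)" by (simp add: krylov_Suc)
  also have "\<dots> = krylov_mat n A v k *\<^sub>v col (companion_mat k cs) j"
  proof (cases "j = k - 1")
    case True
    have "col (companion_mat k cs) j = cs" using True cs j unfolding companion_mat_def by (intro eq_vecI, auto)
    thus ?thesis using True last k by auto
  next
    case False
    hence j1: "j + 1 < k" using j by auto
    have "col (companion_mat k cs) j = unit_vec k (j + 1)" using False j j1 unfolding companion_mat_def
      by (intro eq_vecI, auto simp: unit_vec_def)
    thus ?thesis using mult_unit_vec_eq_col[OF krylov_mat_carrier[of n A v k] j1] col_krylov_mat[OF j1 A v] by simp
  qed
  also have "\<dots> = col (krylov_mat n A v k * companion_mat k cs) j"
    using col_mult2[OF krylov_mat_carrier[of n A v k] companion_mat_carrier[of k cs] j] by simp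
  finally show "col (A * krylov_mat n A v k) j = col (krylov_mat n A v k * companion_mat k cs) j" .
qed (insert A, auto simp: companion_mat_def)

lemma krylov_fixed:
  fixes A E :: "'a::field mat"
  assumes A: "A \<in> carrier_mat n n" and E: "E \<in> carrier_mat n n" and EA: "E * A = A * E"
    and v: "v \<in> carrier_vec n" and Ev: "E *\<^sub>v v = v"
  shows "E *\<^sub>v krylov A v j = krylov A v j"
proof (induction j)
  case (Suc j)
  have "E *\<^sub>v krylov A v (Suc j) = (E * A) *\<^sub>v krylov A v j" using A E v by (simp add: krylov_Suc)
  also have "\<dots> = A *\<^sub>v (E *\<^sub>v krylov A v j)" unfolding EA using A E v by simp
  also have "\<dots> = krylov A v (Suc j)" using Suc by (simp add: krylov_Suc)
  finally show ?case .
qed (simp add: Ev)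

lemma krylov_mat_fixed:
  fixes A E :: "'a::field mat"
  assumes A: "A \<in> carrier_mat n n" and E: "E \<in> carrier_mat n n" and EA: "E * A = A * E"
    and v: "v \<in> carrier_vec n" and Ev: "E *\<^sub>v v = v"
  shows "E * krylov_mat n A v k = krylov_mat n A v k"
proof (rule mat_col_eqI)
  fix j assume "j < dim_col (krylov_mat n A v k)"
  hence j: "j < k" by simp
  show "col (E * krylov_mat n A v k) j = col (krylov_mat n A v k) j"
    using col_mult2[OF E krylov_mat_carrier j] col_krylov_mat[OF j A v] krylov_fixed[OF A E EA v Ev]
    by simp
qed (insert E, auto)

lemma krylov_transpose_scalar_prod:
  fixes A :: "'a::field mat"
  assumes A: "A \<in> carrier_mat n n" and v: "v \<in> carrier_vec n" and f: "f \<in> carrier_vec n"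
  shows "krylov (transpose_mat A) f i \<bullet> krylov A v j = f \<bullet> krylov A v (i + j)"
proof (induction i arbitrary: j)
  case (Suc i)
  have AT: "transpose_mat A \<in> carrier_mat n n" using A by simp
  have "krylov (transpose_mat A) f (Suc i) \<bullet> krylov A v j
      = (transpose_mat A *\<^sub>v krylov (transpose_mat A) f i) \<bullet> krylov A v j"
    by (simp add: krylov_Suc)
  also have "\<dots> = krylov (transpose_mat A) f i \<bullet> (A *\<^sub>v krylov A v j)"
    by (rule transpose_vec_mult_scalar[OF A], insert A v f AT, auto)
  also have "\<dots> = f \<bullet> krylov A v (Suc (i + j))" using Suc[of "Suc j"] by (simp add: krylov_Suc)
  finally show ?case by simp
qed simp

lemma krylov_hankel:
  fixes A :: "'a::field mat"
  assumes A: "A \<in> carrier_mat n n" and v: "v \<in> carrier_vec n" and f: "f \<in> carrier_vec n"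
  shows "transpose_mat (krylov_mat n (transpose_mat A) f k) * krylov_mat n A v k
    = mat k k (\<lambda>(i,j). f \<bullet> krylov A v (i + j))"
proof (rule eq_matI)
  fix i j assume "i < dim_row (mat k k (\<lambda>(i,j). f \<bullet> krylov A v (i + j)))"
    "j < dim_col (mat k k (\<lambda>(i,j). f \<bullet> krylov A v (i + j)))"
  hence i: "i < k" and j: "j < k" by auto
  have AT: "transpose_mat A \<in> carrier_mat n n" using A by simp
  have "(transpose_mat (krylov_mat n (transpose_mat A) f k) * krylov_mat n A v k) $$ (i, j)
      = krylov (transpose_mat A) f i \<bullet> krylov A v j"
    using i j col_krylov_mat[OF i AT f] col_krylov_mat[OF j A v] by simp
  thus "(transpose_mat (krylov_mat n (transpose_mat A) f k) * krylov_mat n A v k) $$ (i, j)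
      = mat k k (\<lambda>(i,j). f \<bullet> krylov A v (i + j)) $$ (i, j)"
    using i j krylov_transpose_scalar_prod[OF A v f] by simp
qed auto

text \<open>A Hankel matrix whose entries vanish above the antidiagonal and equal \<open>1\<close> on it is
  nonsingular: it is triangular with respect to the reversed order of the columns.\<close>

lemma hankel_cols_indep:
  fixes h :: "nat \<Rightarrow> 'a::field"
  assumes h: "\<And>e. e < k \<Longrightarrow> h e = (if e = k - 1 then 1 else 0)"
  shows "cols_indep (mat k k (\<lambda>(i,j). h (i + j)))"
  unfolding cols_indep_def
proof (intro ballI impI)
  let ?H = "mat k k (\<lambda>(i,j). h (i + j))"
  fix c assume c: "c \<in> carrier_vec (dim_col ?H)" and Hc: "?H *\<^sub>v c = 0\<^sub>v (dim_row ?H)"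
  hence c: "c \<in> carrier_vec k" by simp
  have main: "c $ (k - 1 - t) = 0" if "t < k" for t
    using that
  proof (induction t rule: less_induct)
    case (less t)
    have "(\<Sum>j\<in>{0..<k}. h (t + j) * c $ j) = (\<Sum>j\<in>{0..<k}. if j = k - 1 - t then c $ j else 0)"
    proof (rule sum.cong)
      fix j assume "j \<in> {0..<k}"
      hence j: "j < k" by auto
      show "h (t + j) * c $ j = (if j = k - 1 - t then c $ j else 0)"
      proof (cases "j > k - 1 - t")
        case True
        have s: "k - 1 - j < t" using True j by arith
        have s2: "k - 1 - (k - 1 - j) = j" using j by arith
        have "c $ j = 0" using less.IH[OF s] s less.prems unfolding s2 by simp
        thus ?thesis using True by auto
      next
        case False
        thus ?thesis using h[of "t + j"] less.prems j by auto
      qed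
    qed simp
    also have "\<dots> = c $ (k - 1 - t)" using less.prems by (simp add: sum.delta)
    finally have "c $ (k - 1 - t) = (\<Sum>j\<in>{0..<k}. h (t + j) * c $ j)" by simp
    also have "\<dots> = (?H *\<^sub>v c) $ t" using less.prems c
      by (auto simp: scalar_prod_def intro!: sum.cong)
    also have "\<dots> = 0" using Hc less.prems by simp
    finally show ?case .
  qed
  show "c = 0\<^sub>v (dim_col ?H)"
  proof (rule eq_vecI)
    fix i assume "i < dim_vec (0\<^sub>v (dim_col ?H) :: 'a vec)"
    hence i: "i < k" by simp
    have "k - 1 - (k - 1 - i) = i" using i by auto
    thus "c $ i = 0\<^sub>v (dim_col ?H) $ i" using main[of "k - 1 - i"] i by auto
  qed (insert c, auto)
qed

lemma krylov_dual_indep: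
  fixes A :: "'a::field mat"
  assumes A: "A \<in> carrier_mat n n" and v: "v \<in> carrier_vec n" and f: "f \<in> carrier_vec n"
    and fk: "\<And>j. j < k \<Longrightarrow> f \<bullet> krylov A v j = (if j = k - 1 then 1 else 0)"
  shows "cols_indep (transpose_mat (krylov_mat n (transpose_mat A) f k) * krylov_mat n A v k)"
    and "cols_indep (krylov_mat n (transpose_mat A) f k)"
proof -
  let ?K = "krylov_mat n A v k" and ?F = "krylov_mat n (transpose_mat A) f k"
  have K: "?K \<in> carrier_mat n k" and F: "?F \<in> carrier_mat n k"
    and FT: "transpose_mat ?F \<in> carrier_mat k n" by simp_all
  define H where "H = mat k k (\<lambda>(i,j). f \<bullet> krylov A v (i + j))"
  have FK: "transpose_mat ?F * ?K = H" unfolding H_def by (rule krylov_hankel[OF A v f])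
  have indH: "cols_indep H" unfolding H_def by (rule hankel_cols_indep, rule fk)
  thus "cols_indep (transpose_mat ?F * ?K)" unfolding FK .
  have "transpose_mat H = H" unfolding H_def by (intro eq_matI, auto simp: add.commute)
  hence KF: "transpose_mat ?K * ?F = H" using transpose_mult[OF FT K] FK by simp
  show "cols_indep ?F" unfolding cols_indep_def
  proof (intro ballI impI)
    fix d assume d: "d \<in> carrier_vec (dim_col ?F)" and "?F *\<^sub>v d = 0\<^sub>v (dim_row ?F)"
    hence d: "d \<in> carrier_vec k" and Fd: "?F *\<^sub>v d = 0\<^sub>v n" by auto
    have KT: "transpose_mat ?K \<in> carrier_mat k n" by simp
    have "H *\<^sub>v d = transpose_mat ?K *\<^sub>v (?F *\<^sub>v d)"
      unfolding KF[symmetric] using assoc_mult_mat_vec[OF KT F d] .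
    also have "\<dots> = 0\<^sub>v k" unfolding Fd using K by auto
    finally show "d = 0\<^sub>v (dim_col ?F)" using indH d unfolding H_def cols_indep_def by auto
  qed
qed

lemma intertwining_left_inverse:
  fixes A :: "'a::field mat"
  assumes A: "A \<in> carrier_mat n n" and K: "K \<in> carrier_mat n k" and F: "F \<in> carrier_mat k n"
    and C: "C \<in> carrier_mat k k" and C': "C' \<in> carrier_mat k k"
    and AK: "A * K = K * C" and FA: "F * A = C' * F" and ind: "cols_indep (F * K)"
  shows "\<exists>Hi \<in> carrier_mat k k. Hi * F * K = 1\<^sub>m k \<and> Hi * F * A = C * (Hi * F)"
proof -
  let ?H = "F * K"
  have H: "?H \<in> carrier_mat k k" using F K by simp
  obtain Hi where Hi: "Hi \<in> carrier_mat k k" "?H * Hi = 1\<^sub>m k" "Hi * ?H = 1\<^sub>m k"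
    using cols_indep_square_invertible[OF H ind] by blast
  have HC: "?H * C = C' * ?H"
  proof -
    have "?H * C = F * (A * K)" using F K C by (simp add: AK assoc_mult_mat)
    also have "\<dots> = (F * A) * K" using F A K by (simp add: assoc_mult_mat)
    also have "\<dots> = C' * ?H" using C' F K by (simp add: FA assoc_mult_mat)
    finally show ?thesis .
  qed
  have "Hi * C' = Hi * C' * (?H * Hi)" using Hi C' by simp
  also have "\<dots> = Hi * (C' * ?H) * Hi"
    using assoc_mult_mat[OF Hi(1) C' mult_carrier_mat[OF H Hi(1)]] assoc_mult_mat[OF C' H Hi(1)]
      assoc_mult_mat[OF Hi(1) mult_carrier_mat[OF C' H] Hi(1)] by simp
  also have "\<dots> = Hi * (?H * C) * Hi" by (simp add: HC)
  also have "\<dots> = (Hi * ?H) * C * Hi" using assoc_mult_mat[OF Hi(1) H C] by simp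
  also have "\<dots> = C * Hi" using Hi C by simp
  finally have HiC': "Hi * C' = C * Hi" .
  have "Hi * F * K = Hi * ?H" using Hi F K by (simp add: assoc_mult_mat)
  moreover have "Hi * F * A = C * (Hi * F)"
  proof -
    have "Hi * F * A = Hi * (C' * F)" using Hi F A by (simp add: FA[symmetric] assoc_mult_mat)
    also have "\<dots> = C * (Hi * F)"
      using assoc_mult_mat[OF Hi(1) C' F] assoc_mult_mat[OF C Hi(1) F] HiC' by simp
    finally show ?thesis .
  qed
  ultimately show ?thesis using Hi by auto
qed

lemma krylov_dual_vec:
  fixes A E :: "'a::field mat"
  assumes A: "A \<in> carrier_mat n n" and E: "E \<in> carrier_mat n n" and EE: "E * E = E"
    and EA: "E * A = A * E" and v: "v \<in> carrier_vec n" and Ev: "E *\<^sub>v v = v"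
    and k: "k = krylov_dim n A v" "1 \<le> k"
  shows "\<exists>f \<in> carrier_vec n. transpose_mat E *\<^sub>v f = f \<and>
    (\<forall>j < k. f \<bullet> krylov A v j = (if j = k - 1 then 1 else 0))"
proof -
  have "cols_indep (mat_of_cols n (map (krylov A v) [0..<k]))"
    using krylov_dim_indep[OF A v] unfolding k(1) krylov_mat_def .
  moreover have "set (map (krylov A v) [0..<k]) \<subseteq> carrier_vec n" using A v by auto
  ultimately obtain f where f: "f \<in> carrier_vec n"
    and fk: "\<And>j. j < k \<Longrightarrow> f \<bullet> krylov A v j = (if j = k - 1 then 1 else 0)"
    using cols_indep_dual_vec[of "map (krylov A v) [0..<k]" n "k - 1"] k(2) by auto
  have ET: "transpose_mat E \<in> carrier_mat n n" using E by simp
  \<comment> \<open>projecting \<open>f\<close> into the range of \<open>E\<^sup>T\<close> does not change its values on the range of \<open>E\<close>\<close>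
  let ?f = "transpose_mat E *\<^sub>v f"
  have "?f \<bullet> krylov A v j = f \<bullet> krylov A v j" for j
    using transpose_vec_mult_scalar[OF E krylov_carrier[OF A v] f] krylov_fixed[OF A E EA v Ev] by simp
  moreover have "transpose_mat E *\<^sub>v ?f = ?f"
    using transpose_mult[OF E E] EE ET f by (simp flip: assoc_mult_mat_vec)
  ultimately show ?thesis using fk ET f by (intro bexI[of _ ?f]) auto
qed

text \<open>\<open>K\<close> and \<open>G\<close> embed and project an \<open>A\<close>-invariant subspace of the range of \<open>E\<close>
  with an \<open>A\<close>-invariant complementary kernel, on which \<open>A\<close> acts by \<open>B\<close>.\<close>

definition block_frame :: "nat \<Rightarrow> nat \<Rightarrow> 'a::field mat \<Rightarrow> 'a mat \<Rightarrow> 'a mat \<Rightarrow> 'a mat \<Rightarrow> 'a mat \<Rightarrow> bool" where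
  "block_frame n k A E K G B \<longleftrightarrow> K \<in> carrier_mat n k \<and> G \<in> carrier_mat k n \<and> B \<in> carrier_mat k k \<and>
    G * K = 1\<^sub>m k \<and> A * K = K * B \<and> G * A = B * G \<and> E * K = K \<and> G * E = G"

lemma block_frame_transpose:
  fixes A E :: "'a::field mat"
  assumes A: "A \<in> carrier_mat n n" and E: "E \<in> carrier_mat n n"
    and fr: "block_frame n k (transpose_mat A) (transpose_mat E) K G B"
  shows "block_frame n k A E (transpose_mat G) (transpose_mat K) (transpose_mat B)"
proof -
  from fr have K: "K \<in> carrier_mat n k" and G: "G \<in> carrier_mat k n" and B: "B \<in> carrier_mat k k"
    and r: "G * K = 1\<^sub>m k" "transpose_mat A * K = K * B" "G * transpose_mat A = B * G"
      "transpose_mat E * K = K" "G * transpose_mat E = G"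
    unfolding block_frame_def by auto
  have AT: "transpose_mat A \<in> carrier_mat n n" and ET: "transpose_mat E \<in> carrier_mat n n"
    using A E by auto
  have "transpose_mat K * transpose_mat G = 1\<^sub>m k" using transpose_mult[OF G K] r(1) by simp
  moreover have "A * transpose_mat G = transpose_mat G * transpose_mat B"
    using transpose_mult[OF G AT] transpose_mult[OF B G] r(3) by simp
  moreover have "transpose_mat K * A = transpose_mat B * transpose_mat K"
    using transpose_mult[OF AT K] transpose_mult[OF K B] r(2) by simp
  moreover have "E * transpose_mat G = transpose_mat G" using transpose_mult[OF G ET] r(5) by simp
  moreover have "transpose_mat K * E = transpose_mat K" using transpose_mult[OF ET K] r(4) by simp
  ultimately show ?thesis using K G B unfolding block_frame_def by simp
qed

lemma krylov_frame:
  fixes A E :: "'a::field mat"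
  assumes A: "A \<in> carrier_mat n n" and E: "E \<in> carrier_mat n n" and EE: "E * E = E"
    and EA: "E * A = A * E" and v: "v \<in> carrier_vec n" and Ev: "E *\<^sub>v v = v"
    and k: "k = krylov_dim n A v" "1 \<le> k"
    and kmax: "\<And>f. f \<in> carrier_vec n \<Longrightarrow> transpose_mat E *\<^sub>v f = f \<Longrightarrow> krylov_dim n (transpose_mat A) f \<le> k"
  shows "\<exists>K G cs. block_frame n k A E K G (companion_mat k cs)"
proof -
  have AT: "transpose_mat A \<in> carrier_mat n n" and ET: "transpose_mat E \<in> carrier_mat n n"
    using A E by auto
  define K where "K = krylov_mat n A v k"
  have K: "K \<in> carrier_mat n k" unfolding K_def by simp
  obtain cs where cs: "cs \<in> carrier_vec k" "krylov A v k = K *\<^sub>v cs"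
    using krylov_dim_in_col_span[OF A v] unfolding in_col_span_def K_def k(1) by auto
  have AK: "A * K = K * companion_mat k cs"
    unfolding K_def by (rule krylov_mat_companion[OF A v cs(1) k(2)], fold K_def, rule cs(2))
  obtain f where f: "f \<in> carrier_vec n" "transpose_mat E *\<^sub>v f = f"
    and fk: "\<And>j. j < k \<Longrightarrow> f \<bullet> krylov A v j = (if j = k - 1 then 1 else 0)"
    using krylov_dual_vec[OF A E EE EA v Ev k] by blast
  define F where "F = krylov_mat n (transpose_mat A) f k"
  have F: "F \<in> carrier_mat n k" and FT: "transpose_mat F \<in> carrier_mat k n" unfolding F_def by simp_all
  have ind: "cols_indep (transpose_mat F * K)" "cols_indep F"
    using krylov_dual_indep[OF A v f(1), of k] fk unfolding F_def K_def by auto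
  \<comment> \<open>by maximality of \<open>k\<close>, the dual Krylov dimension is exactly \<open>k\<close>\<close>
  have "krylov_dim n (transpose_mat A) f = k"
    using krylov_dim_ge[OF AT f(1) ind(2)[unfolded F_def]] kmax[OF f] by (simp add: le_antisym)
  then obtain cs' where cs': "cs' \<in> carrier_vec k" "krylov (transpose_mat A) f k = F *\<^sub>v cs'"
    using krylov_dim_in_col_span[OF AT f(1)] unfolding in_col_span_def F_def by auto
  have "transpose_mat A * F = F * companion_mat k cs'"
    unfolding F_def by (rule krylov_mat_companion[OF AT f(1) cs'(1) k(2)], fold F_def, rule cs'(2))
  hence FA: "transpose_mat F * A = transpose_mat (companion_mat k cs') * transpose_mat F"
    using transpose_mult[OF AT F] transpose_mult[OF F companion_mat_carrier] by simp
  obtain Hi where Hi: "Hi \<in> carrier_mat k k" "Hi * transpose_mat F * K = 1\<^sub>m k"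
    "Hi * transpose_mat F * A = companion_mat k cs * (Hi * transpose_mat F)"
    using intertwining_left_inverse[OF A K FT companion_mat_carrier _ AK FA ind(1)] by auto
  have EK: "E * K = K" unfolding K_def by (rule krylov_mat_fixed[OF A E EA v Ev])
  have "transpose_mat E * F = F" unfolding F_def
    using krylov_mat_fixed[OF AT ET _ f] transpose_mult[OF E A] transpose_mult[OF A E] EA by simp
  hence "transpose_mat F * E = transpose_mat F" using transpose_mult[OF ET F] by simp
  hence "Hi * transpose_mat F * E = Hi * transpose_mat F"
    using Hi(1) F E by (simp add: assoc_mult_mat)
  thus ?thesis using K Hi FT AK EK unfolding block_frame_def
    by (intro exI[of _ K] exI[of _ "Hi * transpose_mat F"] exI[of _ cs]) auto
qed

section \<open>Sums of eigenvectors\<close>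

inductive_set eigen_sums :: "'a::field mat \<Rightarrow> 'a mat \<Rightarrow> 'a set \<Rightarrow> nat \<Rightarrow> 'a vec set"
  for D E L n where
  zero: "0\<^sub>v n \<in> eigen_sums D E L n"
| add_eigenvector: "y \<in> eigen_sums D E L n \<Longrightarrow> w \<in> carrier_vec n \<Longrightarrow> E *\<^sub>v w = w \<Longrightarrow> c \<in> L
    \<Longrightarrow> D *\<^sub>v w = c \<cdot>\<^sub>v w \<Longrightarrow> w + y \<in> eigen_sums D E L n"

lemma eigen_sums_carrier: "x \<in> eigen_sums D E L n \<Longrightarrow> x \<in> carrier_vec n"
  by (induction rule: eigen_sums.induct, auto)

lemma eigen_sums_mono: "x \<in> eigen_sums D E L n \<Longrightarrow> L \<subseteq> L' \<Longrightarrow> x \<in> eigen_sums D E L' n"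
  by (induction rule: eigen_sums.induct, auto intro: eigen_sums.intros)

lemma eigen_sums_add:
  assumes "x \<in> eigen_sums D E L n" "y \<in> eigen_sums D E L n"
  shows "x + y \<in> eigen_sums D E L n"
  using assms
proof (induction rule: eigen_sums.induct)
  case zero
  thus ?case using eigen_sums_carrier[OF zero.prems] by simp
next
  case (add_eigenvector x w c)
  have "(w + x) + y = w + (x + y)"
    using add_eigenvector eigen_sums_carrier by (metis assoc_add_vec)
  thus ?case using add_eigenvector by (auto intro: eigen_sums.intros)
qed

lemma smult_one_mult_vec:
  fixes x :: "'a::field vec"
  assumes x: "x \<in> carrier_vec n"
  shows "(\<mu> \<cdot>\<^sub>m 1\<^sub>m n) *\<^sub>v x = \<mu> \<cdot>\<^sub>v x"
proof (rule eq_vecI)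
  fix i assume "i < dim_vec (\<mu> \<cdot>\<^sub>v x)"
  hence i: "i < n" using x by simp
  have r: "row (\<mu> \<cdot>\<^sub>m 1\<^sub>m n) i = \<mu> \<cdot>\<^sub>v unit_vec n i" using i by (intro eq_vecI, auto simp: unit_vec_def)
  show "((\<mu> \<cdot>\<^sub>m 1\<^sub>m n) *\<^sub>v x) $ i = (\<mu> \<cdot>\<^sub>v x) $ i"
    using i x by (simp add: r scalar_prod_left_unit)
qed (insert x, simp)

lemma shift_mult_vec:
  fixes D :: "'a::field mat"
  assumes D: "D \<in> carrier_mat n n" and x: "x \<in> carrier_vec n"
  shows "(D - \<mu> \<cdot>\<^sub>m 1\<^sub>m n) *\<^sub>v x = D *\<^sub>v x - \<mu> \<cdot>\<^sub>v x"
  using minus_mult_distrib_mat_vec[OF D _ x, of "\<mu> \<cdot>\<^sub>m 1\<^sub>m n"] smult_one_mult_vec[OF x] by simp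

lemma smult_one_commute:
  fixes X :: "'a::field mat"
  assumes X: "X \<in> carrier_mat n n"
  shows "X * (\<mu> \<cdot>\<^sub>m 1\<^sub>m n) = \<mu> \<cdot>\<^sub>m X" "(\<mu> \<cdot>\<^sub>m 1\<^sub>m n) * X = \<mu> \<cdot>\<^sub>m X"
proof -
  show "X * (\<mu> \<cdot>\<^sub>m 1\<^sub>m n) = \<mu> \<cdot>\<^sub>m X" using mult_smult_distrib[OF X one_carrier_mat] X by simp
  show "(\<mu> \<cdot>\<^sub>m 1\<^sub>m n) * X = \<mu> \<cdot>\<^sub>m X" using mult_smult_assoc_mat[OF one_carrier_mat X] X by simp
qed

lemma shift_commute:
  fixes X Y :: "'a::field mat"
  assumes X: "X \<in> carrier_mat n n" and Y: "Y \<in> carrier_mat n n" and XY: "X * Y = Y * X"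
  shows "(X - \<mu> \<cdot>\<^sub>m 1\<^sub>m n) * Y = Y * (X - \<mu> \<cdot>\<^sub>m 1\<^sub>m n)"
proof -
  have S: "\<mu> \<cdot>\<^sub>m 1\<^sub>m n \<in> carrier_mat n n" by simp
  have "(X - \<mu> \<cdot>\<^sub>m 1\<^sub>m n) * Y = X * Y - (\<mu> \<cdot>\<^sub>m 1\<^sub>m n) * Y"
    by (rule minus_mult_distrib_mat[OF X S Y])
  also have "\<dots> = Y * X - Y * (\<mu> \<cdot>\<^sub>m 1\<^sub>m n)" unfolding XY smult_one_commute[OF Y] ..
  also have "\<dots> = Y * (X - \<mu> \<cdot>\<^sub>m 1\<^sub>m n)"
    by (rule mult_minus_distrib_mat[OF Y X S, symmetric])
  finally show ?thesis .
qed

fun shift_prod :: "'a::field mat \<Rightarrow> nat \<Rightarrow> 'a list \<Rightarrow> 'a mat" where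
  "shift_prod D n [] = 1\<^sub>m n"
| "shift_prod D n (\<mu> # S) = (D - \<mu> \<cdot>\<^sub>m 1\<^sub>m n) * shift_prod D n S"

lemma shift_prod_carrier[simp]: "D \<in> carrier_mat n n \<Longrightarrow> shift_prod D n S \<in> carrier_mat n n"
  by (induction S, auto)

lemma shift_prod_commute:
  fixes D :: "'a::field mat"
  assumes D: "D \<in> carrier_mat n n"
  shows "D * shift_prod D n S = shift_prod D n S * D"
proof (induction S)
  case Nil thus ?case using D by simp
next
  case (Cons \<mu> S)
  have L: "D - \<mu> \<cdot>\<^sub>m 1\<^sub>m n \<in> carrier_mat n n" by (rule minus_carrier_mat, simp)
  have N: "shift_prod D n S \<in> carrier_mat n n" using D by simp
  have DL: "D * (D - \<mu> \<cdot>\<^sub>m 1\<^sub>m n) = (D - \<mu> \<cdot>\<^sub>m 1\<^sub>m n) * D"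
    by (rule shift_commute[OF D D refl, symmetric])
  have "D * shift_prod D n (\<mu> # S) = (D * (D - \<mu> \<cdot>\<^sub>m 1\<^sub>m n)) * shift_prod D n S"
    using assoc_mult_mat[OF D L N] by simp
  also have "\<dots> = (D - \<mu> \<cdot>\<^sub>m 1\<^sub>m n) * (D * shift_prod D n S)"
    unfolding DL using assoc_mult_mat[OF L D N] by simp
  also have "\<dots> = (D - \<mu> \<cdot>\<^sub>m 1\<^sub>m n) * shift_prod D n S * D"
    unfolding Cons using assoc_mult_mat[OF L N D] by simp
  finally show ?case by simp
qed

lemma shift_prod_Cons_mult_vec:
  fixes D :: "'a::field mat"
  assumes D: "D \<in> carrier_mat n n" and x: "x \<in> carrier_vec n"
  shows "shift_prod D n (\<mu> # S) *\<^sub>v x = shift_prod D n S *\<^sub>v (D *\<^sub>v x - \<mu> \<cdot>\<^sub>v x)"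
proof -
  have L: "D - \<mu> \<cdot>\<^sub>m 1\<^sub>m n \<in> carrier_mat n n" by (rule minus_carrier_mat, simp)
  have N: "shift_prod D n S \<in> carrier_mat n n" using D by simp
  have "shift_prod D n (\<mu> # S) = shift_prod D n S * (D - \<mu> \<cdot>\<^sub>m 1\<^sub>m n)"
    using shift_commute[OF D N shift_prod_commute[OF D]] by simp
  hence "shift_prod D n (\<mu> # S) *\<^sub>v x = shift_prod D n S *\<^sub>v ((D - \<mu> \<cdot>\<^sub>m 1\<^sub>m n) *\<^sub>v x)"
    using assoc_mult_mat_vec[OF N L x] by simp
  thus ?thesis using shift_mult_vec[OF D x] by simp
qed

lemma transpose_shift:
  fixes D :: "'a::field mat"
  assumes D: "D \<in> carrier_mat n n"
  shows "transpose_mat (D - \<mu> \<cdot>\<^sub>m 1\<^sub>m n) = transpose_mat D - \<mu> \<cdot>\<^sub>m 1\<^sub>m n"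
  using D by (intro eq_matI, auto)

lemma shift_prod_transpose:
  fixes D :: "'a::field mat"
  assumes D: "D \<in> carrier_mat n n"
  shows "shift_prod (transpose_mat D) n S = transpose_mat (shift_prod D n S)"
proof (induction S)
  case Nil thus ?case by simp
next
  case (Cons \<mu> S)
  have L: "D - \<mu> \<cdot>\<^sub>m 1\<^sub>m n \<in> carrier_mat n n" by (rule minus_carrier_mat, simp)
  have N: "shift_prod D n S \<in> carrier_mat n n" using D by simp
  have "shift_prod (transpose_mat D) n (\<mu> # S) = transpose_mat (D - \<mu> \<cdot>\<^sub>m 1\<^sub>m n) * transpose_mat (shift_prod D n S)"
    using Cons transpose_shift[OF D] by simp
  also have "\<dots> = transpose_mat (shift_prod D n S * (D - \<mu> \<cdot>\<^sub>m 1\<^sub>m n))"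
    using transpose_mult[OF N L] by simp
  also have "shift_prod D n S * (D - \<mu> \<cdot>\<^sub>m 1\<^sub>m n) = shift_prod D n (\<mu> # S)"
    using shift_commute[OF D N shift_prod_commute[OF D]] by simp
  finally show ?case .
qed

lemma shift_prod_append:
  fixes D :: "'a::field mat"
  assumes D: "D \<in> carrier_mat n n"
  shows "shift_prod D n (S1 @ S2) = shift_prod D n S1 * shift_prod D n S2"
proof (induction S1)
  case Nil thus ?case using D by (simp add: left_mult_one_mat[OF shift_prod_carrier[OF D]])
next
  case (Cons \<mu> S1)
  have L: "D - \<mu> \<cdot>\<^sub>m 1\<^sub>m n \<in> carrier_mat n n" by (rule minus_carrier_mat, simp)
  show ?case using Cons assoc_mult_mat[OF L shift_prod_carrier[OF D] shift_prod_carrier[OF D], of S1 S2] by simp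
qed

lemma eigen_sums_shift_surj:
  fixes D :: "'a::field mat"
  assumes D: "D \<in> carrier_mat n n" and E: "E \<in> carrier_mat n n"
    and y: "y \<in> eigen_sums D E L n" and mu: "\<mu> \<notin> L"
  shows "\<exists>z \<in> eigen_sums D E L n. D *\<^sub>v z - \<mu> \<cdot>\<^sub>v z = y"
  using y
proof (induction rule: eigen_sums.induct)
  case zero
  show ?case using D by (intro bexI[of _ "0\<^sub>v n"], auto intro: eigen_sums.intros)
next
  case (add_eigenvector y w c)
  from add_eigenvector.IH obtain z where z: "z \<in> eigen_sums D E L n" "D *\<^sub>v z - \<mu> \<cdot>\<^sub>v z = y" by auto
  have cm: "c - \<mu> \<noteq> 0" using add_eigenvector.hyps(4) mu by auto
  define w' where "w' = (1 / (c - \<mu>)) \<cdot>\<^sub>v w"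
  have w': "w' \<in> carrier_vec n" unfolding w'_def using add_eigenvector by simp
  have Ew': "E *\<^sub>v w' = w'" unfolding w'_def mult_mat_vec[OF E add_eigenvector.hyps(2)] add_eigenvector.hyps(3) ..
  have Dw': "D *\<^sub>v w' = c \<cdot>\<^sub>v w'" unfolding w'_def mult_mat_vec[OF D add_eigenvector.hyps(2)] add_eigenvector.hyps(5)
    using add_eigenvector.hyps(2) by (intro eq_vecI, auto)
  have zc: "z \<in> carrier_vec n" using eigen_sums_carrier[OF z(1)] .
  have "w' + z \<in> eigen_sums D E L n" using z(1) w' Ew' add_eigenvector.hyps(4) Dw' by (rule eigen_sums.intros)
  moreover have "D *\<^sub>v (w' + z) - \<mu> \<cdot>\<^sub>v (w' + z) = w + y"
  proof -
    have dist: "D *\<^sub>v (w' + z) = D *\<^sub>v w' + D *\<^sub>v z" by (rule mult_add_distrib_mat_vec[OF D w' zc])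
    show ?thesis
    proof (rule eq_vecI)
      fix i assume "i < dim_vec (w + y)"
      hence i: "i < n" using eigen_sums_carrier[OF add_eigenvector.hyps(1)] by simp
      have yi: "y $ i = (D *\<^sub>v z) $ i - \<mu> * z $ i"
        using arg_cong[OF z(2), of "\<lambda>v. v $ i"] i zc D by simp
      have di: "(D *\<^sub>v w') $ i = c * w' $ i" using arg_cong[OF Dw', of "\<lambda>v. v $ i"] i w' by simp
      have wi: "w' $ i = w $ i / (c - \<mu>)" unfolding w'_def using i add_eigenvector.hyps(2) by simp
      have yc: "y \<in> carrier_vec n" using eigen_sums_carrier[OF add_eigenvector.hyps(1)] .
      have e1: "(D *\<^sub>v (w' + z) - \<mu> \<cdot>\<^sub>v (w' + z)) $ i
          = (D *\<^sub>v w') $ i + (D *\<^sub>v z) $ i - \<mu> * (w' $ i + z $ i)"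
        unfolding dist using i zc w' D by (simp del: index_mult_mat_vec)
      have e2: "(w + y) $ i = w $ i + y $ i" using i yc by simp
      have "c * w' $ i - \<mu> * w' $ i = (c - \<mu>) * (w $ i / (c - \<mu>))" unfolding wi by (rule left_diff_distrib[symmetric])
      also have "\<dots> = w $ i" using cm by simp
      finally have "w $ i = c * w' $ i - \<mu> * w' $ i" by simp
      thus "(D *\<^sub>v (w' + z) - \<mu> \<cdot>\<^sub>v (w' + z)) $ i = (w + y) $ i"
        unfolding e1 e2 di yi by (simp add: algebra_simps)
    qed (insert D zc w' add_eigenvector.hyps(2) eigen_sums_carrier[OF add_eigenvector.hyps(1)], simp)
  qed
  ultimately show ?case by blast
qed

lemma shift_prod_kernel_eigen_sums:
  fixes D :: "'a::field mat"
  assumes D: "D \<in> carrier_mat n n"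
  shows "distinct S \<Longrightarrow> x \<in> carrier_vec n \<Longrightarrow> shift_prod D n S *\<^sub>v x = 0\<^sub>v n \<Longrightarrow>
    x \<in> eigen_sums D (1\<^sub>m n) (set S) n"
proof (induction S arbitrary: x)
  case Nil
  hence "x = 0\<^sub>v n" by simp
  thus ?case by (simp add: eigen_sums.intros)
next
  case (Cons \<mu> S)
  define y where "y = D *\<^sub>v x - \<mu> \<cdot>\<^sub>v x"
  have yc: "y \<in> carrier_vec n" unfolding y_def using D Cons.prems(2) by simp
  have "shift_prod D n S *\<^sub>v y = 0\<^sub>v n"
    using shift_prod_Cons_mult_vec[OF D Cons.prems(2), of \<mu> S] Cons.prems(3) unfolding y_def by simp
  hence ysp: "y \<in> eigen_sums D (1\<^sub>m n) (set S) n" using Cons.IH Cons.prems(1) yc by simp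
  have mu: "\<mu> \<notin> set S" using Cons.prems(1) by simp
  obtain z where z: "z \<in> eigen_sums D (1\<^sub>m n) (set S) n" "D *\<^sub>v z - \<mu> \<cdot>\<^sub>v z = y"
    using eigen_sums_shift_surj[OF D one_carrier_mat ysp mu] by blast
  have zc: "z \<in> carrier_vec n" using eigen_sums_carrier[OF z(1)] .
  have xc: "x \<in> carrier_vec n" using Cons.prems(2) .
  define x' where "x' = x - z"
  have x'c: "x' \<in> carrier_vec n" unfolding x'_def using xc zc by simp
  have Dx': "D *\<^sub>v x' = \<mu> \<cdot>\<^sub>v x'"
  proof -
    have dist: "D *\<^sub>v x' = D *\<^sub>v x - D *\<^sub>v z" unfolding x'_def by (rule mult_minus_distrib_mat_vec[OF D xc zc])
    show ?thesis
    proof (rule eq_vecI)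
      fix i assume "i < dim_vec (\<mu> \<cdot>\<^sub>v x')"
      hence i: "i < n" using x'c by simp
      have yi1: "y $ i = (D *\<^sub>v x) $ i - \<mu> * x $ i" unfolding y_def using i D xc by (simp del: index_mult_mat_vec)
      have yi2: "y $ i = (D *\<^sub>v z) $ i - \<mu> * z $ i" using arg_cong[OF z(2), of "\<lambda>v. v $ i"] i D zc
        by (simp del: index_mult_mat_vec)
      have "(D *\<^sub>v x') $ i = (D *\<^sub>v x) $ i - (D *\<^sub>v z) $ i" unfolding dist using i D by (simp del: index_mult_mat_vec)
      also have "\<dots> = \<mu> * x $ i - \<mu> * z $ i" using yi1 yi2 by (simp add: algebra_simps)
      also have "\<dots> = (\<mu> \<cdot>\<^sub>v x') $ i" unfolding x'_def using i xc zc by (simp add: algebra_simps)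
      finally show "(D *\<^sub>v x') $ i = (\<mu> \<cdot>\<^sub>v x') $ i" .
    qed (insert D x'c, simp)
  qed
  have z2: "z \<in> eigen_sums D (1\<^sub>m n) (set (\<mu> # S)) n" by (rule eigen_sums_mono[OF z(1)], auto)
  have "x' + z \<in> eigen_sums D (1\<^sub>m n) (set (\<mu> # S)) n"
    by (rule eigen_sums.intros(2)[OF z2 x'c _ _ Dx'], insert x'c, auto)
  moreover have "x' + z = x" unfolding x'_def using xc zc by (intro eq_vecI, auto)
  ultimately show ?case by simp
qed

lemma eigenvector_basis:
  fixes D :: "'a::{finite,field} mat"
  assumes D: "D \<in> carrier_mat n n"
    and sp: "\<And>x. x \<in> carrier_vec n \<Longrightarrow> x \<in> eigen_sums D (1\<^sub>m n) UNIV n"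
  shows "\<exists>bs X. length bs = n \<and> set bs \<subseteq> carrier_vec n \<and> (\<forall>w \<in> set bs. \<exists>c. D *\<^sub>v w = c \<cdot>\<^sub>v w) \<and>
    X \<in> carrier_mat n n \<and> mat_of_cols n bs * X = 1\<^sub>m n \<and> X * mat_of_cols n bs = 1\<^sub>m n"
proof -
  define Eg where "Eg = {w \<in> carrier_vec n. \<exists>c. D *\<^sub>v w = c \<cdot>\<^sub>v w}"
  have "finite Eg" unfolding Eg_def using finite_carrier_vec[of n] by (rule rev_finite_subset, auto)
  then obtain ws where ws: "set ws = Eg" using finite_list by blast
  have wsc: "set ws \<subseteq> carrier_vec n" unfolding ws Eg_def by auto
  have "\<exists>bs. set bs \<subseteq> set ws \<and> cols_indep (mat_of_cols n bs) \<and>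
      (\<forall>w \<in> set ws. in_col_span (mat_of_cols n bs) w)"
    using cols_indep_extend_spanning[OF _ cols_indep_Nil wsc] by simp
  then obtain bs where bs: "set bs \<subseteq> Eg" "cols_indep (mat_of_cols n bs)"
    "\<forall>w \<in> Eg. in_col_span (mat_of_cols n bs) w"
    using ws by auto
  define U where "U = mat_of_cols n bs"
  have U: "U \<in> carrier_mat n (length bs)" unfolding U_def by (rule mat_of_cols_carrier)
  have spU: "in_col_span U x" if "x \<in> carrier_vec n" for x
    using sp[OF that]
  proof (induction rule: eigen_sums.induct)
    case zero
    show ?case using in_col_span_zero[of U] U by simp
  next
    case (add_eigenvector y w c)
    have "w \<in> Eg" unfolding Eg_def using add_eigenvector by auto
    hence "in_col_span U w" using bs(3) unfolding U_def by auto
    thus ?case using in_col_span_add add_eigenvector.IH by blast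
  qed
  have "length bs = n" using spanning_cols_indep_invertible(1)[OF U bs(2)[folded U_def] spU] by simp
  moreover have "set bs \<subseteq> carrier_vec n" "\<forall>w \<in> set bs. \<exists>c. D *\<^sub>v w = c \<cdot>\<^sub>v w"
    using bs(1) unfolding Eg_def by auto
  ultimately show ?thesis
    using spanning_cols_indep_invertible(2)[OF U bs(2)[folded U_def] spU] unfolding U_def by auto
qed

lemma diagonalizable_if_eigenvector_basis:
  fixes D :: "'a::field mat"
  assumes D: "D \<in> carrier_mat n n" and len: "length bs = n" and bsc: "set bs \<subseteq> carrier_vec n"
    and ev: "\<forall>w \<in> set bs. \<exists>c. D *\<^sub>v w = c \<cdot>\<^sub>v w"
    and X: "X \<in> carrier_mat n n" "mat_of_cols n bs * X = 1\<^sub>m n" "X * mat_of_cols n bs = 1\<^sub>m n"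
  shows "diagonalizable_mat n D"
proof -
  define U where "U = mat_of_cols n bs"
  have U: "U \<in> carrier_mat n n" unfolding U_def using mat_of_cols_carrier[of n bs] len by simp
  define ev where "ev = (\<lambda>w. SOME c. D *\<^sub>v w = c \<cdot>\<^sub>v w)"
  have ev: "D *\<^sub>v w = ev w \<cdot>\<^sub>v w" if "w \<in> set bs" for w
    unfolding ev_def using ev that by (metis (mono_tags) someI_ex)
  define Lam where "Lam = mat n n (\<lambda>(i,j). if i = j then ev (bs ! i) else 0)"
  have Lam: "Lam \<in> carrier_mat n n" unfolding Lam_def by simp
  have DU: "D * U = U * Lam"
  proof (rule mat_col_eqI)
    fix j assume "j < dim_col (U * Lam)"
    hence j: "j < n" and jl: "j < length bs" using Lam len by auto
    have bj: "bs ! j \<in> carrier_vec n" using bsc nth_mem[OF jl] by auto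
    have colU: "col U j = bs ! j" unfolding U_def by (rule col_mat_of_cols[OF jl bj])
    have colL: "col Lam j = ev (bs ! j) \<cdot>\<^sub>v unit_vec n j" unfolding Lam_def using j
      by (intro eq_vecI, auto simp: unit_vec_def)
    have "col (D * U) j = D *\<^sub>v bs ! j" using col_mult2[OF D U j] colU by simp
    also have "\<dots> = ev (bs ! j) \<cdot>\<^sub>v bs ! j" using ev nth_mem[OF jl] by simp
    also have "\<dots> = ev (bs ! j) \<cdot>\<^sub>v (U *\<^sub>v unit_vec n j)" using mult_unit_vec_eq_col[OF U j] colU by simp
    also have "\<dots> = U *\<^sub>v col Lam j" unfolding colL using mult_mat_vec[OF U unit_vec_carrier] by simp
    also have "\<dots> = col (U * Lam) j" using col_mult2[OF U Lam j] by simp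
    finally show "col (D * U) j = col (U * Lam) j" .
  qed (insert D U Lam, auto)
  have "X * D * U = X * (D * U)" using assoc_mult_mat[OF X(1) D U] .
  also have "\<dots> = (X * U) * Lam" unfolding DU using assoc_mult_mat[OF X(1) U Lam] by simp
  finally have XDU: "X * D * U = Lam" using X(3) Lam unfolding U_def by simp
  have "diagonal_mat Lam" unfolding diagonal_mat_def Lam_def by auto
  thus ?thesis unfolding diagonalizable_mat_def using U X XDU unfolding U_def by blast
qed

lemma diagonalizable_if_eigen_sums:
  fixes D :: "'a::{finite,field} mat"
  assumes D: "D \<in> carrier_mat n n"
    and sp: "\<And>x. x \<in> carrier_vec n \<Longrightarrow> x \<in> eigen_sums D (1\<^sub>m n) UNIV n"
  shows "diagonalizable_mat n D"
  using eigenvector_basis[OF D sp] diagonalizable_if_eigenvector_basis[OF D] by blast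

section \<open>Finite fields\<close>

lemma of_nat_card_eq_0: "of_nat (card (UNIV :: 'a set)) = (0 :: 'a :: {finite, ring_1})"
proof -
  have "(\<Sum>x\<in>UNIV. x + 1) = (\<Sum>x\<in>UNIV. x :: 'a)"
    by (rule sum.reindex_bij_witness[of _ "\<lambda>x. x - 1" "\<lambda>x. x + 1"]) auto
  thus ?thesis by (simp add: sum.distrib)
qed

lemma two_neq_zero_if_odd_card:
  assumes "odd (card (UNIV :: 'a::{finite,field} set))"
  shows "(2::'a) \<noteq> 0"
proof
  assume two: "(2::'a) = 0"
  obtain m where "card (UNIV :: 'a set) = Suc (2 * m)" using assms oddE by (metis Suc_eq_plus1)
  hence "of_nat (card (UNIV :: 'a set)) = (1 :: 'a)" using two by simp
  thus False using of_nat_card_eq_0[where 'a = 'a] by simp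
qed

lemma finite_field_pow_card:
  fixes x :: "'a::{finite,field}"
  shows "x ^ card (UNIV :: 'a set) = x"
proof (cases "x = 0")
  case True
  have "card (UNIV :: 'a set) \<noteq> 0" by simp
  thus ?thesis using True by (simp add: power_0_left)
next
  case False
  let ?N = "UNIV - {0 :: 'a}"
  have fin: "finite ?N" by simp
  have bij: "bij_betw (\<lambda>y. x * y) ?N ?N"
  proof (rule bij_betwI[of _ _ _ "\<lambda>y. y / x"])
    show "(\<lambda>y. x * y) \<in> ?N \<rightarrow> ?N" using False by auto
    show "(\<lambda>y. y / x) \<in> ?N \<rightarrow> ?N" using False by auto
  qed (insert False, auto)
  have "prod (\<lambda>y. x * y) ?N = prod (\<lambda>y. y) ?N"
    using prod.reindex_bij_betw[OF bij, of "\<lambda>y. y"] by simp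
  moreover have "prod (\<lambda>y. x * y) ?N = x ^ card ?N * prod (\<lambda>y. y) ?N"
    by (simp add: prod.distrib)
  moreover have "prod (\<lambda>y. y) ?N \<noteq> 0" using fin by (simp add: prod_zero_iff)
  ultimately have x1: "x ^ card ?N = 1" by simp
  have c1: "card ?N = card (UNIV :: 'a set) - 1" by (simp add: card_Diff_singleton)
  have "card (UNIV :: 'a set) \<ge> 1"
    using card_gt_0_iff[of "UNIV :: 'a set"] by simp
  hence q: "card (UNIV :: 'a set) = Suc (card ?N)" unfolding c1 by simp
  show ?thesis unfolding q using x1 by simp
qed

lemma finite_field_avoid:
  assumes "card (UNIV :: 'a::{finite,field} set) \<ge> 5"
  shows "\<exists>a::'a. a \<noteq> 0 \<and> a \<noteq> t \<and> a \<noteq> - t"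
proof -
  have "card {0, t, - t} \<le> 3" by (auto simp: card_insert_if)
  hence "{0, t, - t} \<noteq> (UNIV :: 'a set)" using assms by auto
  thus ?thesis by auto
qed

section \<open>Splitting a companion matrix\<close>

text \<open>
  Away from the last column it keeps
  the subdiagonal entries \<open>1\<close> in odd rows and puts \<open>a\<^sup>2\<close> on the superdiagonal in even rows,
  so the index pairs \<open>{2m, 2m + 1}\<close> carry the blocks \<open>[[0, a\<^sup>2], [1, 0]]\<close>, annihilated by
  \<open>x\<^sup>2 - a\<^sup>2\<close>. For even \<open>k\<close> the last column is changed in the even rows to \<open>\<beta>\<close> in row
  \<open>k - 2\<close> and \<open>0\<close> elsewhere, making the last pair a block with characteristic polynomial
  \<open>x\<^sup>2 - \<tau> x - \<beta>\<close>, where \<open>\<tau>\<close> is the last coefficient. All entries of the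
  difference with the companion matrix lie in even rows and odd columns, so it squares to zero.
\<close>

definition diag_part_last_col :: "nat \<Rightarrow> 'a::field vec \<Rightarrow> 'a \<Rightarrow> nat \<Rightarrow> 'a" where
  "diag_part_last_col k cs \<beta> i = (if odd k \<or> odd i then cs $ i else if i = k - 2 then \<beta> else 0)"

definition diag_part :: "nat \<Rightarrow> 'a::field vec \<Rightarrow> 'a \<Rightarrow> 'a \<Rightarrow> 'a mat" where
  "diag_part k cs a \<beta> = mat k k (\<lambda>(i,j). if j = k - 1 then diag_part_last_col k cs \<beta> i
      else if i = j + 1 \<and> odd i then 1 else if j = i + 1 \<and> even i then a^2 else 0)"

lemma diag_part_carrier[simp]: "diag_part k cs a \<beta> \<in> carrier_mat k k" unfolding diag_part_def by simp

lemma diag_part_dims[simp]: "dim_row (diag_part k cs a \<beta>) = k" "dim_col (diag_part k cs a \<beta>) = k"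
  unfolding diag_part_def by simp_all

lemma diag_part_mult_carrier[simp]: "x \<in> carrier_vec k \<Longrightarrow> diag_part k cs a \<beta> *\<^sub>v x \<in> carrier_vec k"
  by (rule mult_mat_vec_carrier[OF diag_part_carrier])

lemma diag_part_mult_vec:
  fixes y :: "'a::field vec"
  assumes y: "y \<in> carrier_vec k" and i: "i < k"
  shows "(diag_part k cs a \<beta> *\<^sub>v y) $ i = (if odd i then y $ (i - 1) else 0)
    + (if even i \<and> i + 1 < k - 1 then a^2 * y $ (i + 1) else 0) + diag_part_last_col k cs \<beta> i * y $ (k - 1)"
proof -
  let ?M = "diag_part k cs a \<beta>"
  have "(?M *\<^sub>v y) $ i = (\<Sum>j\<in>{0..<k}. ?M $$ (i, j) * y $ j)"
    using i y by (simp add: scalar_prod_def diag_part_def)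
  also have "\<dots> = (\<Sum>j\<in>{0..<k}. (if j = k - 1 then diag_part_last_col k cs \<beta> i * y $ j else 0)
      + (if j = i - 1 then (if odd i then y $ j else 0) else 0)
      + (if j = i + 1 then (if even i \<and> i + 1 < k - 1 then a^2 * y $ j else 0) else 0))"
  proof (rule sum.cong)
    fix j assume "j \<in> {0..<k}"
    hence j: "j < k" by simp
    show "?M $$ (i, j) * y $ j = (if j = k - 1 then diag_part_last_col k cs \<beta> i * y $ j else 0)
      + (if j = i - 1 then (if odd i then y $ j else 0) else 0)
      + (if j = i + 1 then (if even i \<and> i + 1 < k - 1 then a^2 * y $ j else 0) else 0)"
      using i j unfolding diag_part_def by (auto elim: oddE)
  qed simp
  also have "\<dots> = (if odd i then y $ (i - 1) else 0)
    + (if even i \<and> i + 1 < k - 1 then a^2 * y $ (i + 1) else 0) + diag_part_last_col k cs \<beta> i * y $ (k - 1)"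
    using i by (auto simp: sum.distrib)
  finally show ?thesis .
qed

definition paired_len :: "nat \<Rightarrow> nat" where "paired_len k = (if odd k then k - 1 else k - 2)"

text \<open>Vectors supported on the complete index pairs \<open>{2m, 2m + 1}\<close> below the last block.\<close>

definition paired_vec :: "nat \<Rightarrow> 'a::field vec \<Rightarrow> bool" where
  "paired_vec k y \<longleftrightarrow> y \<in> carrier_vec k \<and> (\<forall>i. paired_len k \<le> i \<longrightarrow> i < k \<longrightarrow> y $ i = 0)"

lemma diag_part_mult_paired_vec:
  fixes v :: "'a::field vec"
  assumes k: "1 \<le> k" and v: "paired_vec k v" and i: "i < k"
  shows "(diag_part k cs a \<beta> *\<^sub>v v) $ i
    = (if i < paired_len k then (if odd i then v $ (i - 1) else a^2 * v $ (i + 1)) else 0)"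
proof -
  let ?h = "paired_len k"
  have vc: "v \<in> carrier_vec k" and v0: "\<And>i. ?h \<le> i \<Longrightarrow> i < k \<Longrightarrow> v $ i = 0"
    using v unfolding paired_vec_def by auto
  have hk1: "?h \<le> k - 1" and he: "even ?h" unfolding paired_len_def by auto
  have last: "v $ (k - 1) = 0" using v0[of "k - 1"] hk1 k by simp
  show ?thesis
  proof (cases "i < ?h")
    case True
    have "even i \<Longrightarrow> i + 1 < k - 1" using True he hk1 by presburger
    thus ?thesis using True diag_part_mult_vec[OF vc i] last by auto
  next
    case False
    have o: "v $ (i - 1) = 0" if "odd i"
    proof -
      have "i \<noteq> ?h" using that he by auto
      hence "?h \<le> i - 1" using False by auto
      thus ?thesis using v0 i by simp
    qed
    have e: "i + 1 < k - 1 \<Longrightarrow> v $ (i + 1) = 0" using v0 False by simp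
    show ?thesis using False diag_part_mult_vec[OF vc i] last o e by auto
  qed
qed

lemma diag_part_paired_vec:
  fixes y :: "'a::field vec"
  assumes k: "1 \<le> k" and y: "paired_vec k y"
  shows "paired_vec k (diag_part k cs a \<beta> *\<^sub>v y)"
    and "diag_part k cs a \<beta> *\<^sub>v (diag_part k cs a \<beta> *\<^sub>v y) = a^2 \<cdot>\<^sub>v y"
proof -
  let ?M = "diag_part k cs a \<beta>"
  let ?h = "paired_len k"
  note gen = diag_part_mult_paired_vec[OF k]
  have yc: "y \<in> carrier_vec k" and y0: "\<And>i. ?h \<le> i \<Longrightarrow> i < k \<Longrightarrow> y $ i = 0"
    using y unfolding paired_vec_def by auto
  have hk1: "?h \<le> k - 1" and he: "even ?h" unfolding paired_len_def by auto
  show W: "paired_vec k (?M *\<^sub>v y)" unfolding paired_vec_def using yc gen[OF y] by auto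
  show "?M *\<^sub>v (?M *\<^sub>v y) = a^2 \<cdot>\<^sub>v y"
  proof (rule eq_vecI)
    fix i assume "i < dim_vec (a^2 \<cdot>\<^sub>v y)"
    hence i: "i < k" using yc by simp
    consider "i < ?h" "odd i" | "i < ?h" "even i" | "\<not> i < ?h" by blast
    thus "(?M *\<^sub>v (?M *\<^sub>v y)) $ i = (a^2 \<cdot>\<^sub>v y) $ i"
    proof cases
      case 1
      hence "i - 1 < ?h" "even (i - 1)" "i - 1 + 1 = i" by (auto elim: oddE)
      thus ?thesis using gen[OF W i] gen[OF y, of "i - 1"] 1 i yc by auto
    next
      case 2
      hence "i + 1 < ?h" "odd (i + 1)" using he by (auto, presburger)
      thus ?thesis using gen[OF W i] gen[OF y, of "i + 1"] 2 i yc hk1 by auto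
    next
      case 3
      thus ?thesis using gen[OF W i] y0[of i] i yc by simp
    qed
  qed (insert yc, simp)
qed

lemma diag_part_last_rows:
  fixes v :: "'a::field vec"
  assumes v: "v \<in> carrier_vec k" and k: "even k" "2 \<le> k"
  shows "(diag_part k cs a \<beta> *\<^sub>v v) $ (k - 2) = \<beta> * v $ (k - 1)"
    "(diag_part k cs a \<beta> *\<^sub>v v) $ (k - 1) = v $ (k - 2) + cs $ (k - 1) * v $ (k - 1)"
proof -
  have a: "k - 2 < k" "k - 1 < k" using k by auto
  have b: "odd (k - 1)" "even (k - 2)" "k - 1 - 1 = k - 2" using k by auto
  show "(diag_part k cs a \<beta> *\<^sub>v v) $ (k - 2) = \<beta> * v $ (k - 1)"
    using diag_part_mult_vec[OF v a(1)] b k unfolding diag_part_last_col_def by auto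
  show "(diag_part k cs a \<beta> *\<^sub>v v) $ (k - 1) = v $ (k - 2) + cs $ (k - 1) * v $ (k - 1)"
    using diag_part_mult_vec[OF v a(2)] b k unfolding diag_part_last_col_def by auto
qed

lemma shift_prod_last_pair:
  fixes x :: "'a::field vec"
  assumes x: "x \<in> carrier_vec k" and k: "even k" "2 \<le> k"
    and r: "r1 + r2 = cs $ (k - 1)" and \<beta>: "\<beta> = - (r1 * r2)"
  shows "paired_vec k (shift_prod (diag_part k cs a \<beta>) k [r1, r2] *\<^sub>v x)"
proof -
  let ?M = "diag_part k cs a \<beta>"
  let ?\<tau> = "cs $ (k - 1)"
  define y1 where "y1 = ?M *\<^sub>v x - r1 \<cdot>\<^sub>v x"
  define y2 where "y2 = ?M *\<^sub>v y1 - r2 \<cdot>\<^sub>v y1"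
  have y1c: "y1 \<in> carrier_vec k" unfolding y1_def using x by simp
  have y2c: "y2 \<in> carrier_vec k" unfolding y2_def using y1c by simp
  have eq: "shift_prod ?M k [r1, r2] *\<^sub>v x = y2"
    unfolding y2_def y1_def
    using shift_prod_Cons_mult_vec[OF diag_part_carrier x, where \<mu> = r1 and S = "[r2]"]
      shift_prod_Cons_mult_vec[OF diag_part_carrier y1c[unfolded y1_def], where \<mu> = r2 and S = "[]"] x
    by simp
  have a: "k - 2 < k" "k - 1 < k" using k by auto
  have y1a: "y1 $ (k - 2) = \<beta> * x $ (k - 1) - r1 * x $ (k - 2)"
    unfolding y1_def using diag_part_last_rows(1)[OF x k] a x by simp
  have y1b: "y1 $ (k - 1) = x $ (k - 2) + ?\<tau> * x $ (k - 1) - r1 * x $ (k - 1)"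
    unfolding y1_def using diag_part_last_rows(2)[OF x k] a x by simp
  have y2a: "y2 $ (k - 2) = \<beta> * y1 $ (k - 1) - r2 * y1 $ (k - 2)"
    unfolding y2_def using diag_part_last_rows(1)[OF y1c k] a y1c by simp
  have y2b: "y2 $ (k - 1) = y1 $ (k - 2) + ?\<tau> * y1 $ (k - 1) - r2 * y1 $ (k - 1)"
    unfolding y2_def using diag_part_last_rows(2)[OF y1c k] a y1c by simp
  have z1: "y2 $ (k - 2) = 0" unfolding y2a y1a y1b \<beta> r[symmetric] by (simp add: algebra_simps)
  have z2: "y2 $ (k - 1) = 0" unfolding y2b y1a y1b \<beta> r[symmetric] by (simp add: algebra_simps)
  have "paired_len k = k - 2" unfolding paired_len_def using k by simp
  hence "i = k - 2 \<or> i = k - 1" if "paired_len k \<le> i" "i < k" for i using that by auto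
  hence "paired_vec k y2" unfolding paired_vec_def using y2c z1 z2 by auto
  thus ?thesis unfolding eq .
qed

lemma shift_prod_last_entry:
  fixes x :: "'a::field vec"
  assumes x: "x \<in> carrier_vec k" and k: "odd k"
  shows "paired_vec k (shift_prod (diag_part k cs a \<beta>) k [cs $ (k - 1)] *\<^sub>v x)"
proof -
  let ?M = "diag_part k cs a \<beta>"
  define y where "y = ?M *\<^sub>v x - cs $ (k - 1) \<cdot>\<^sub>v x"
  have yc: "y \<in> carrier_vec k" unfolding y_def using x by simp
  have eq: "shift_prod ?M k [cs $ (k - 1)] *\<^sub>v x = y"
    unfolding y_def
    using shift_prod_Cons_mult_vec[OF diag_part_carrier x, where \<mu> = "cs $ (k - 1)" and S = "[]"] x
    by simp
  have a: "k - 1 < k" "even (k - 1)" "\<not> (k - 1 + 1 < k - 1)" using k by (auto elim: oddE)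
  have "y $ (k - 1) = 0"
    unfolding y_def using diag_part_mult_vec[OF x a(1)] a x k unfolding diag_part_last_col_def by simp
  moreover have len: "paired_len k = k - 1" unfolding paired_len_def using k by simp
  ultimately have "paired_vec k y" unfolding paired_vec_def using yc
  proof (intro conjI allI impI)
    fix i assume "paired_len k \<le> i" "i < k"
    hence "i = k - 1" using len by auto
    thus "y $ i = 0" using \<open>y $ (k - 1) = 0\<close> by simp
  qed
  thus ?thesis unfolding eq .
qed

lemma shift_prod_pm_paired_vec:
  fixes y :: "'a::field vec"
  assumes k: "1 \<le> k" and y: "paired_vec k y"
  shows "shift_prod (diag_part k cs a \<beta>) k [a, - a] *\<^sub>v y = 0\<^sub>v k"
proof -
  let ?M = "diag_part k cs a \<beta>"
  have yc: "y \<in> carrier_vec k" using y unfolding paired_vec_def by simp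
  define z where "z = ?M *\<^sub>v y - a \<cdot>\<^sub>v y"
  have zc: "z \<in> carrier_vec k" unfolding z_def using yc by simp
  have ayc: "a \<cdot>\<^sub>v y \<in> carrier_vec k" using yc by simp
  have "shift_prod ?M k [a, - a] *\<^sub>v y = shift_prod ?M k [- a] *\<^sub>v z"
    unfolding z_def using shift_prod_Cons_mult_vec[OF diag_part_carrier yc, where \<mu> = a and S = "[- a]"] by simp
  also have "\<dots> = ?M *\<^sub>v z - (- a) \<cdot>\<^sub>v z"
    using shift_prod_Cons_mult_vec[OF diag_part_carrier zc, where \<mu> = "- a" and S = "[]"] zc by simp
  also have "?M *\<^sub>v z = ?M *\<^sub>v (?M *\<^sub>v y) - a \<cdot>\<^sub>v (?M *\<^sub>v y)"
    unfolding z_def using mult_minus_distrib_mat_vec[OF diag_part_carrier _ ayc]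
      mult_mat_vec[OF diag_part_carrier yc] yc by simp
  also have "?M *\<^sub>v (?M *\<^sub>v y) = a^2 \<cdot>\<^sub>v y" by (rule diag_part_paired_vec(2)[OF k y])
  finally show ?thesis unfolding z_def using yc
    by (intro eq_vecI, auto simp del: index_mult_mat_vec simp: power2_eq_square algebra_simps)
qed

lemma shift_prod_diag_part:
  fixes cs :: "'a::field vec"
  assumes k: "1 \<le> k"
    and R: "(odd k \<and> R = [cs $ (k - 1)]) \<or>
      (even k \<and> R = [r1, r2] \<and> r1 + r2 = cs $ (k - 1) \<and> \<beta> = - (r1 * r2))"
  shows "shift_prod (diag_part k cs a \<beta>) k ([a, - a] @ R) = 0\<^sub>m k k"
proof -
  let ?M = "diag_part k cs a \<beta>"
  have P: "shift_prod ?M k S \<in> carrier_mat k k" for S by (rule shift_prod_carrier[OF diag_part_carrier])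
  show ?thesis
  proof (rule mat_col_eqI)
    fix j assume "j < dim_col (0\<^sub>m k k :: 'a mat)"
    hence j: "j < k" by simp
    let ?x = "unit_vec k j :: 'a vec"
    have x: "?x \<in> carrier_vec k" by simp
    have W: "paired_vec k (shift_prod ?M k R *\<^sub>v ?x)"
    proof (cases "odd k")
      case True thus ?thesis using R shift_prod_last_entry[OF x True] by auto
    next
      case False
      hence "2 \<le> k" using k by (auto elim: evenE)
      thus ?thesis using R False shift_prod_last_pair[OF x _ _] by auto
    qed
    have "col (shift_prod ?M k ([a, - a] @ R)) j = shift_prod ?M k ([a, - a] @ R) *\<^sub>v ?x"
      by (rule mult_unit_vec_eq_col[symmetric, OF P j])
    also have "\<dots> = shift_prod ?M k [a, - a] *\<^sub>v (shift_prod ?M k R *\<^sub>v ?x)"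
      unfolding shift_prod_append[OF diag_part_carrier] by (rule assoc_mult_mat_vec[OF P P x])
    also have "\<dots> = 0\<^sub>v k" by (rule shift_prod_pm_paired_vec[OF k W])
    finally show "col (shift_prod ?M k ([a, - a] @ R)) j = col (0\<^sub>m k k) j" using j by simp
  qed (use carrier_matD[OF P[of R]] in simp_all)
qed

lemma companion_minus_diag_part_nonzero:
  fixes cs :: "'a::field vec"
  assumes i: "i < k" and j: "j < k"
    and nz: "(companion_mat k cs - diag_part k cs a \<beta>) $$ (i, j) \<noteq> 0"
  shows "even i \<and> odd j"
  using nz i j unfolding companion_mat_def diag_part_def diag_part_last_col_def
  by (auto split: if_splits)

lemma companion_minus_diag_part_square:
  fixes cs :: "'a::field vec"
  shows "(companion_mat k cs - diag_part k cs a \<beta>) * (companion_mat k cs - diag_part k cs a \<beta>) = 0\<^sub>m k k"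
proof -
  let ?N = "companion_mat k cs - diag_part k cs a \<beta>"
  have N: "?N \<in> carrier_mat k k" by (rule minus_carrier_mat, simp)
  show ?thesis
  proof (rule eq_matI)
    fix i j assume "i < dim_row (0\<^sub>m k k :: 'a mat)" "j < dim_col (0\<^sub>m k k :: 'a mat)"
    hence i: "i < k" and j: "j < k" by auto
    have "(?N * ?N) $$ (i, j) = (\<Sum>l\<in>{0..<k}. ?N $$ (i, l) * ?N $$ (l, j))"
      using N i j by (simp add: scalar_prod_def)
    also have "\<dots> = 0"
    proof (rule sum.neutral, intro ballI)
      fix l assume "l \<in> {0..<k}"
      hence l: "l < k" by simp
      show "?N $$ (i, l) * ?N $$ (l, j) = 0"
        using companion_minus_diag_part_nonzero[OF i l, of cs a \<beta>]
          companion_minus_diag_part_nonzero[OF l j, of cs a \<beta>] by auto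
    qed
    finally show "(?N * ?N) $$ (i, j) = 0\<^sub>m k k $$ (i, j)" using i j by simp
  qed (insert N, auto)
qed

lemma companion_mat_split:
  fixes cs :: "'a::{finite,field} vec"
  assumes two: "(2::'a) \<noteq> 0" and q5: "card (UNIV :: 'a set) \<ge> 5" and k: "1 \<le> k"
  shows "\<exists>Dc Mc S. Dc \<in> carrier_mat k k \<and> Mc \<in> carrier_mat k k \<and> companion_mat k cs = Dc + Mc \<and>
    Mc * Mc = 0\<^sub>m k k \<and> distinct S \<and> shift_prod Dc k S = 0\<^sub>m k k"
proof -
  define \<tau> where "\<tau> = cs $ (k - 1)"
  define t where "t = (if odd k then \<tau> else if \<tau> \<noteq> 0 then \<tau> else 1)"
  obtain a :: 'a where a: "a \<noteq> 0" "a \<noteq> t" "a \<noteq> - t" using finite_field_avoid[OF q5] by blast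
  have ana: "a \<noteq> - a"
  proof
    assume "a = - a"
    hence "2 * a = 0" by (metis add.inverse_neutral add_eq_0_iff2 mult_2)
    thus False using two a(1) by simp
  qed
  have one: "(1::'a) \<noteq> - 1"
  proof
    assume "(1::'a) = - 1"
    hence "(2::'a) = 0" by (metis add_eq_0_iff2 one_add_one)
    thus False using two by simp
  qed
  \<comment> \<open>for even \<open>k\<close> the last block has characteristic polynomial \<open>x\<^sup>2 - \<tau> x - \<beta>\<close>: take
    \<open>\<beta> = 0\<close> (roots \<open>0, \<tau>\<close>) unless \<open>\<tau> = 0\<close>, and then \<open>\<beta> = 1\<close> (roots \<open>1, -1\<close>); the choice
    of \<open>a\<close> makes \<open>a\<close>, \<open>-a\<close> and these roots pairwise distinct\<close>
  define R where "R = (if odd k then [\<tau>] else if \<tau> \<noteq> 0 then [0, \<tau>] else [1, - 1 :: 'a])"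
  define \<beta> where "\<beta> = (if odd k then 0 else if \<tau> \<noteq> 0 then 0 else (1::'a))"
  have Rc: "(odd k \<and> R = [cs $ (k - 1)]) \<or>
      (even k \<and> R = [hd R, hd (tl R)] \<and> hd R + hd (tl R) = cs $ (k - 1) \<and> \<beta> = - (hd R * hd (tl R)))"
    unfolding R_def \<beta>_def \<tau>_def by auto
  define Dc where "Dc = diag_part k cs a \<beta>"
  define Mc where "Mc = companion_mat k cs - Dc"
  have Dc: "Dc \<in> carrier_mat k k" unfolding Dc_def by simp
  have Mc: "Mc \<in> carrier_mat k k" unfolding Mc_def by (rule minus_carrier_mat, simp add: Dc_def)
  have sum: "companion_mat k cs = Dc + Mc" unfolding Mc_def Dc_def
    by (intro eq_matI, auto simp: companion_mat_def diag_part_def)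
  have sq: "Mc * Mc = 0\<^sub>m k k" unfolding Mc_def Dc_def by (rule companion_minus_diag_part_square)
  have an: "shift_prod Dc k ([a, - a] @ R) = 0\<^sub>m k k" unfolding Dc_def by (rule shift_prod_diag_part[OF k Rc])
  have dist: "distinct ([a, - a] @ R)"
    using a ana one unfolding R_def t_def by (auto split: if_splits simp: minus_equation_iff)
  show ?thesis using Dc Mc sum sq an dist by blast
qed

lemma eigen_sums_if_shift_prod_zero:
  fixes D :: "'a::field mat"
  assumes D: "D \<in> carrier_mat n n" and S: "distinct S" and Z: "shift_prod D n S = 0\<^sub>m n n"
    and x: "x \<in> carrier_vec n"
  shows "x \<in> eigen_sums D (1\<^sub>m n) UNIV n"
  by (rule eigen_sums_mono[OF shift_prod_kernel_eigen_sums[OF D S x]], use Z x in auto)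

lemma companion_block_split:
  fixes cs :: "'a::{finite,field} vec"
  assumes two: "(2::'a) \<noteq> 0" and q5: "card (UNIV :: 'a set) \<ge> 5" and k: "1 \<le> k"
    and B: "B = companion_mat k cs \<or> B = transpose_mat (companion_mat k cs)"
  shows "\<exists>Db Mb. Db \<in> carrier_mat k k \<and> Mb \<in> carrier_mat k k \<and> B = Db + Mb \<and> Mb * Mb = 0\<^sub>m k k \<and>
    (\<forall>u \<in> carrier_vec k. u \<in> eigen_sums Db (1\<^sub>m k) UNIV k)"
proof -
  obtain Dc Mc S where Dc: "Dc \<in> carrier_mat k k" and Mc: "Mc \<in> carrier_mat k k"
    and sum: "companion_mat k cs = Dc + Mc" and sq: "Mc * Mc = 0\<^sub>m k k" and dist: "distinct S"
    and an: "shift_prod Dc k S = 0\<^sub>m k k"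
    using companion_mat_split[OF two q5 k, of cs] by blast
  show ?thesis
  proof (cases "B = companion_mat k cs")
    case True
    thus ?thesis using Dc Mc sum sq eigen_sums_if_shift_prod_zero[OF Dc dist an] by blast
  next
    case False
    hence BT: "B = transpose_mat (companion_mat k cs)" using B by simp
    have DcT: "transpose_mat Dc \<in> carrier_mat k k" and McT: "transpose_mat Mc \<in> carrier_mat k k"
      using Dc Mc by auto
    have "B = transpose_mat Dc + transpose_mat Mc" unfolding BT sum using transpose_add[OF Dc Mc] by simp
    moreover have "transpose_mat Mc * transpose_mat Mc = 0\<^sub>m k k"
      using transpose_mult[OF Mc Mc] sq by simp
    moreover have "shift_prod (transpose_mat Dc) k S = 0\<^sub>m k k"
      unfolding shift_prod_transpose[OF Dc] an by simp
    ultimately show ?thesis using DcT McT eigen_sums_if_shift_prod_zero[OF DcT dist] by blast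
  qed
qed

section \<open>Splitting off cyclic blocks\<close>

text \<open>Among all vectors \<open>v\<close> in the range of \<open>E\<close> and \<open>f\<close> in the range of \<open>E\<^sup>T\<close>, pick one of
  largest Krylov dimension (for \<open>A\<close>, resp. \<open>A\<^sup>T\<close>); maximality is what \<open>krylov_frame\<close> needs.\<close>

lemma companion_frame_exists:
  fixes A E :: "'a::{finite,field} mat"
  assumes A: "A \<in> carrier_mat n n" and E: "E \<in> carrier_mat n n" and EE: "E * E = E"
    and EA: "E * A = A * E" and x0: "x0 \<in> carrier_vec n" and nz: "E *\<^sub>v x0 \<noteq> 0\<^sub>v n"
  shows "\<exists>k K G cs. 1 \<le> k \<and> (block_frame n k A E K G (companion_mat k cs) \<or>
    block_frame n k A E K G (transpose_mat (companion_mat k cs)))"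
proof -
  have AT: "transpose_mat A \<in> carrier_mat n n" and ET: "transpose_mat E \<in> carrier_mat n n"
    using A E by auto
  have ETE: "transpose_mat E * transpose_mat E = transpose_mat E"
    using transpose_mult[OF E E] EE by simp
  have ETA: "transpose_mat E * transpose_mat A = transpose_mat A * transpose_mat E"
    using transpose_mult[OF E A] transpose_mult[OF A E] EA by simp
  define v0 where "v0 = E *\<^sub>v x0"
  have v0: "v0 \<in> carrier_vec n" and Ev0: "E *\<^sub>v v0 = v0"
    unfolding v0_def using E x0 assoc_mult_mat_vec[OF E E x0] EE by auto
  define VS where "VS = {w \<in> carrier_vec n. E *\<^sub>v w = w}"
  define FS where "FS = {f \<in> carrier_vec n. transpose_mat E *\<^sub>v f = f}"
  define KS where "KS = krylov_dim n A ` VS \<union> krylov_dim n (transpose_mat A) ` FS"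
  have finKS: "finite KS" unfolding KS_def VS_def FS_def
    using finite_carrier_vec[of n, where 'a = 'a] by auto
  have v0VS: "v0 \<in> VS" unfolding VS_def using v0 Ev0 by simp
  define km where "km = Max KS"
  have kmin: "km \<in> KS" unfolding km_def using finKS v0VS KS_def Max_in by blast
  have kmge: "\<And>j. j \<in> KS \<Longrightarrow> j \<le> km" unfolding km_def by (rule Max_ge[OF finKS])
  have "1 \<le> krylov_dim n A v0" by (rule krylov_dim_pos[OF A v0], unfold v0_def, rule nz)
  moreover have "krylov_dim n A v0 \<le> km" using kmge v0VS unfolding KS_def by auto
  ultimately have km1: "1 \<le> km" by simp
  show ?thesis
  proof (cases "km \<in> krylov_dim n A ` VS")
    case True
    then obtain v where v: "v \<in> VS" "km = krylov_dim n A v" by auto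
    have "krylov_dim n (transpose_mat A) f \<le> km" if "f \<in> carrier_vec n" "transpose_mat E *\<^sub>v f = f" for f
      using kmge that unfolding KS_def FS_def by auto
    with krylov_frame[OF A E EE EA _ _ v(2) km1] v(1) km1 show ?thesis unfolding VS_def by blast
  next
    case False
    then obtain f where f: "f \<in> FS" "km = krylov_dim n (transpose_mat A) f"
      using kmin unfolding KS_def by auto
    have "krylov_dim n (transpose_mat (transpose_mat A)) w \<le> km"
      if "w \<in> carrier_vec n" "transpose_mat (transpose_mat E) *\<^sub>v w = w" for w
      using kmge that unfolding KS_def VS_def by auto
    with krylov_frame[OF AT ET ETE ETA _ _ f(2) km1] f(1)
    obtain K G cs where "block_frame n km (transpose_mat A) (transpose_mat E) K G (companion_mat km cs)"
      unfolding FS_def by blast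
    from block_frame_transpose[OF A E this] km1 show ?thesis by blast
  qed
qed

text \<open>\<open>D\<close> and \<open>M\<close> split the compression \<open>E A\<close> of \<open>A\<close> to the range of \<open>E\<close>; \<open>D\<close> has a basis of
  eigenvectors on that range.\<close>

definition range_split :: "nat \<Rightarrow> 'a::field mat \<Rightarrow> 'a mat \<Rightarrow> 'a mat \<Rightarrow> 'a mat \<Rightarrow> bool" where
  "range_split n E A D M \<longleftrightarrow> D \<in> carrier_mat n n \<and> M \<in> carrier_mat n n \<and> E * A = D + M \<and>
    M * M = 0\<^sub>m n n \<and> E * D = D \<and> D * E = D \<and> E * M = M \<and> M * E = M \<and>
    (\<forall>x \<in> carrier_vec n. E *\<^sub>v x = x \<longrightarrow> x \<in> eigen_sums D E UNIV n)"

lemma range_split_zero: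
  assumes "(A :: 'a::field mat) \<in> carrier_mat n n"
  shows "range_split n (0\<^sub>m n n) A (0\<^sub>m n n) (0\<^sub>m n n)"
proof -
  have "x \<in> eigen_sums (0\<^sub>m n n) (0\<^sub>m n n) UNIV n" if "x \<in> carrier_vec n" "0\<^sub>m n n *\<^sub>v x = x" for x :: "'a vec"
  proof -
    have "0\<^sub>m n n *\<^sub>v x = 0\<^sub>v n" using that(1) by auto
    hence "x = 0\<^sub>v n" using that(2) by simp
    thus ?thesis by (simp add: eigen_sums.zero)
  qed
  thus ?thesis unfolding range_split_def using assms by auto
qed

lemma block_frame_complement:
  fixes A E :: "'a::field mat"
  assumes A: "A \<in> carrier_mat n n" and E: "E \<in> carrier_mat n n" and EE: "E * E = E"
    and EA: "E * A = A * E" and fr: "block_frame n k A E K G B" and E': "E' = E - K * G"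
  shows "E' \<in> carrier_mat n n" and "E' * E' = E'" and "E' * A = A * E'"
    and "E * E' = E'" and "E' * E = E'" and "G * E' = 0\<^sub>m k n" and "E' * K = 0\<^sub>m n k"
proof -
  from fr have K: "K \<in> carrier_mat n k" and G: "G \<in> carrier_mat k n" and B: "B \<in> carrier_mat k k"
    and GK: "G * K = 1\<^sub>m k" and AK: "A * K = K * B" and GA: "G * A = B * G"
    and EK: "E * K = K" and GE: "G * E = G"
    unfolding block_frame_def by auto
  define P where "P = K * G"
  have P: "P \<in> carrier_mat n n" unfolding P_def using K G by simp
  show E'c: "E' \<in> carrier_mat n n" unfolding E' P_def[symmetric] by (rule minus_carrier_mat[OF P])
  have EP: "E * P = P" unfolding P_def using assoc_mult_mat[OF E K G] EK by simp
  have PE: "P * E = P" unfolding P_def using assoc_mult_mat[OF K G E] GE by simp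
  have GP: "G * P = G" unfolding P_def using assoc_mult_mat[OF G K G] GK G by simp
  have PK: "P * K = K" unfolding P_def using assoc_mult_mat[OF K G K] GK K by simp
  have PA: "P * A = A * P"
  proof -
    have "P * A = K * (B * G)" unfolding P_def using assoc_mult_mat[OF K G A] GA by simp
    also have "\<dots> = (A * K) * G" using assoc_mult_mat[OF K B G] AK by simp
    also have "\<dots> = A * P" unfolding P_def using assoc_mult_mat[OF A K G] by simp
    finally show ?thesis .
  qed
  show GE': "G * E' = 0\<^sub>m k n"
    unfolding E' P_def[symmetric] mult_minus_distrib_mat[OF G E P] GE GP using G by simp
  show "E' * K = 0\<^sub>m n k"
    unfolding E' P_def[symmetric] minus_mult_distrib_mat[OF E P K] EK PK using K by simp
  show EE': "E * E' = E'"
    unfolding E' P_def[symmetric] mult_minus_distrib_mat[OF E E P] EE EP ..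
  show "E' * E = E'"
    unfolding E' P_def[symmetric] minus_mult_distrib_mat[OF E P E] EE PE ..
  have "E' * E' = E * E' - P * E'"
    using minus_mult_distrib_mat[OF E P E'c] unfolding E' P_def[symmetric] .
  also have "P * E' = 0\<^sub>m n n" unfolding P_def using assoc_mult_mat[OF K G E'c] GE' K by simp
  finally show "E' * E' = E'" unfolding EE' using E'c by (intro eq_matI) auto
  show "E' * A = A * E'"
    unfolding E' P_def[symmetric] minus_mult_distrib_mat[OF E P A] mult_minus_distrib_mat[OF A E P] EA PA ..
qed

lemma card_range_complement_less:
  fixes A E :: "'a::{finite,field} mat"
  assumes A: "A \<in> carrier_mat n n" and E: "E \<in> carrier_mat n n" and EE: "E * E = E"
    and EA: "E * A = A * E" and fr: "block_frame n k A E K G B" and k: "1 \<le> k"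
    and E': "E' = E - K * G"
  shows "card ((\<lambda>x. E' *\<^sub>v x) ` carrier_vec n) < card ((\<lambda>x. E *\<^sub>v x) ` carrier_vec n)"
proof (rule psubset_card_mono)
  from fr have K: "K \<in> carrier_mat n k" and G: "G \<in> carrier_mat k n" and GK: "G * K = 1\<^sub>m k"
    and EK: "E * K = K" unfolding block_frame_def by auto
  note c = block_frame_complement[OF A E EE EA fr E']
  show "finite ((\<lambda>x. E *\<^sub>v x) ` carrier_vec n)" using finite_carrier_vec by auto
  have sub: "(\<lambda>x. E' *\<^sub>v x) ` carrier_vec n \<subseteq> (\<lambda>x. E *\<^sub>v x) ` carrier_vec n"
  proof
    fix y assume "y \<in> (\<lambda>x. E' *\<^sub>v x) ` carrier_vec n"
    then obtain x where x: "x \<in> carrier_vec n" "y = E' *\<^sub>v x" by auto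
    have "y = E *\<^sub>v (E' *\<^sub>v x)" using x c(1,4) E by (simp flip: assoc_mult_mat_vec)
    thus "y \<in> (\<lambda>x. E *\<^sub>v x) ` carrier_vec n" using c(1) x(1) by auto
  qed
  \<comment> \<open>the first column of \<open>K\<close> lies in the range of \<open>E\<close> but is killed by \<open>E'\<close>\<close>
  define y where "y = K *\<^sub>v unit_vec k 0"
  have Gy: "G *\<^sub>v y = unit_vec k 0" unfolding y_def
    using assoc_mult_mat_vec[OF G K, of "unit_vec k 0"] GK by simp
  have "y \<in> (\<lambda>x. E *\<^sub>v x) ` carrier_vec n"
    using assoc_mult_mat_vec[OF E K, of "unit_vec k 0"] EK K unfolding y_def
    by (intro image_eqI[of _ _ y]) (auto simp: y_def)
  moreover have "y \<notin> (\<lambda>x. E' *\<^sub>v x) ` carrier_vec n"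
  proof
    assume "y \<in> (\<lambda>x. E' *\<^sub>v x) ` carrier_vec n"
    then obtain x where x: "x \<in> carrier_vec n" "y = E' *\<^sub>v x" by auto
    have "G *\<^sub>v y = (G * E') *\<^sub>v x" unfolding x(2) using G c(1) x(1) by simp
    also have "\<dots> = 0\<^sub>v k" unfolding c(6) using x(1) by auto
    finally have "(G *\<^sub>v y) $ 0 = 0" using k by simp
    thus False using Gy k by simp
  qed
  ultimately show "(\<lambda>x. E' *\<^sub>v x) ` carrier_vec n \<subset> (\<lambda>x. E *\<^sub>v x) ` carrier_vec n" using sub by blast
qed

lemma eigen_sums_map:
  fixes K :: "'a::field mat"
  assumes K: "K \<in> carrier_mat n k" and u: "u \<in> eigen_sums Db Ek L k"
    and hD: "\<And>w c. w \<in> carrier_vec k \<Longrightarrow> Db *\<^sub>v w = c \<cdot>\<^sub>v w \<Longrightarrow> D *\<^sub>v (K *\<^sub>v w) = c \<cdot>\<^sub>v (K *\<^sub>v w)"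
    and hE: "\<And>w. w \<in> carrier_vec k \<Longrightarrow> E *\<^sub>v (K *\<^sub>v w) = K *\<^sub>v w"
  shows "K *\<^sub>v u \<in> eigen_sums D E L n"
  using u
proof (induction rule: eigen_sums.induct)
  case zero
  have "K *\<^sub>v 0\<^sub>v k = 0\<^sub>v n" using K by auto
  thus ?case by (simp add: eigen_sums.zero)
next
  case (add_eigenvector y w c)
  have yc: "y \<in> carrier_vec k" using eigen_sums_carrier[OF add_eigenvector.hyps(1)] .
  have "K *\<^sub>v (w + y) = K *\<^sub>v w + K *\<^sub>v y" by (rule mult_add_distrib_mat_vec[OF K add_eigenvector.hyps(2) yc])
  moreover have "K *\<^sub>v w + K *\<^sub>v y \<in> eigen_sums D E L n"
    using add_eigenvector K
    by (intro eigen_sums.add_eigenvector[of _ _ _ _ _ _ c]) (auto simp: hE hD)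
  ultimately show ?case by simp
qed

lemma eigen_sums_transfer:
  assumes x: "x \<in> eigen_sums D2 E2 L n"
    and h: "\<And>w c. w \<in> carrier_vec n \<Longrightarrow> E2 *\<^sub>v w = w \<Longrightarrow> D2 *\<^sub>v w = c \<cdot>\<^sub>v w \<Longrightarrow> E *\<^sub>v w = w \<and> D *\<^sub>v w = c \<cdot>\<^sub>v w"
  shows "x \<in> eigen_sums D E L n"
  using x
proof (induction rule: eigen_sums.induct)
  case zero show ?case by (rule eigen_sums.intros)
next
  case (add_eigenvector y w c)
  show ?case using h[OF add_eigenvector.hyps(2,3,5)] add_eigenvector by (auto intro: eigen_sums.intros)
qed

lemma block_frame_sandwich:
  fixes E :: "'a::field mat"
  assumes E: "E \<in> carrier_mat n n" and fr: "block_frame n k A E K G B" and X: "X \<in> carrier_mat k k"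
  shows "G * (K * X * G) = X * G" and "K * X * G * K = K * X"
    and "E * (K * X * G) = K * X * G" and "K * X * G * E = K * X * G"
proof -
  from fr have K: "K \<in> carrier_mat n k" and G: "G \<in> carrier_mat k n" and GK: "G * K = 1\<^sub>m k"
    and EK: "E * K = K" and GE: "G * E = G" unfolding block_frame_def by auto
  have "G * (K * X * G) = G * (K * X) * G" using assoc_mult_mat[OF G mult_carrier_mat[OF K X] G] by simp
  thus "G * (K * X * G) = X * G" using assoc_mult_mat[OF G K X] GK X by simp
  show "K * X * G * K = K * X" using assoc_mult_mat[OF mult_carrier_mat[OF K X] G K] GK K X by simp
  show "E * (K * X * G) = K * X * G"
    using assoc_mult_mat[OF E mult_carrier_mat[OF K X] G] assoc_mult_mat[OF E K X] EK by simp
  show "K * X * G * E = K * X * G" using assoc_mult_mat[OF mult_carrier_mat[OF K X] G E] GE by simp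
qed

lemma block_frame_complement_supported:
  fixes A E :: "'a::field mat"
  assumes A: "A \<in> carrier_mat n n" and E: "E \<in> carrier_mat n n" and EE: "E * E = E"
    and EA: "E * A = A * E" and fr: "block_frame n k A E K G B" and E': "E' = E - K * G"
    and Z: "Z \<in> carrier_mat n n" and E'Z: "E' * Z = Z" and ZE': "Z * E' = Z"
  shows "G * Z = 0\<^sub>m k n" and "Z * K = 0\<^sub>m n k" and "E * Z = Z" and "Z * E = Z"
proof -
  from fr have K: "K \<in> carrier_mat n k" and G: "G \<in> carrier_mat k n" unfolding block_frame_def by auto
  note c = block_frame_complement[OF A E EE EA fr E']
  show "G * Z = 0\<^sub>m k n" using assoc_mult_mat[OF G c(1) Z] E'Z c(6) Z by simp
  show "Z * K = 0\<^sub>m n k" using assoc_mult_mat[OF Z c(1) K] ZE' c(7) Z by simp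
  show "E * Z = Z" using assoc_mult_mat[OF E c(1) Z] E'Z c(4) by simp
  show "Z * E = Z" using assoc_mult_mat[OF Z c(1) E] ZE' c(5) by simp
qed

text \<open>The block part \<open>K D\<^sub>b G\<close> has the eigenvectors \<open>K w\<close>, and it vanishes on the range of \<open>E'\<close>,
  where the eigenvectors of \<open>D\<^sub>2\<close> live; together they span the range of \<open>E = K G + E'\<close>.\<close>

lemma range_split_extend_eigen_sums:
  fixes A E :: "'a::field mat"
  assumes A: "A \<in> carrier_mat n n" and E: "E \<in> carrier_mat n n" and EE: "E * E = E"
    and EA: "E * A = A * E" and fr: "block_frame n k A E K G B" and E': "E' = E - K * G"
    and Db: "Db \<in> carrier_mat k k" and spDb: "\<forall>u \<in> carrier_vec k. u \<in> eigen_sums Db (1\<^sub>m k) UNIV k"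
    and rs: "range_split n E' A D2 M2"
    and x: "x \<in> carrier_vec n" and Ex: "E *\<^sub>v x = x"
  shows "x \<in> eigen_sums (K * Db * G + D2) E UNIV n"
proof -
  from fr have K: "K \<in> carrier_mat n k" and G: "G \<in> carrier_mat k n" and EK: "E * K = K"
    unfolding block_frame_def by auto
  note c = block_frame_complement[OF A E EE EA fr E']
  from rs have D2: "D2 \<in> carrier_mat n n" and E'D2: "E' * D2 = D2" and D2E': "D2 * E' = D2"
    and sp2: "\<forall>x \<in> carrier_vec n. E' *\<^sub>v x = x \<longrightarrow> x \<in> eigen_sums D2 E' UNIV n"
    unfolding range_split_def by auto
  note s = block_frame_sandwich[OF E fr Db]
  note z = block_frame_complement_supported[OF A E EE EA fr E' D2 E'D2 D2E']
  define D1 where "D1 = K * Db * G"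
  have D1: "D1 \<in> carrier_mat n n" unfolding D1_def using K G Db by simp
  have "K *\<^sub>v (G *\<^sub>v x) \<in> eigen_sums (D1 + D2) E UNIV n"
  proof (rule eigen_sums_map[OF K spDb[rule_format]])
    fix w c assume w: "w \<in> carrier_vec k" and Dbw: "Db *\<^sub>v w = c \<cdot>\<^sub>v w"
    have DK: "(D1 + D2) * K = K * Db"
      using add_mult_distrib_mat[OF D1 D2 K] s(2) z(2) K Db unfolding D1_def by simp
    have "(D1 + D2) *\<^sub>v (K *\<^sub>v w) = ((D1 + D2) * K) *\<^sub>v w"
      using assoc_mult_mat_vec[OF add_carrier_mat[OF D2] K w] by simp
    also have "\<dots> = K *\<^sub>v (Db *\<^sub>v w)" unfolding DK using assoc_mult_mat_vec[OF K Db w] .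
    also have "\<dots> = c \<cdot>\<^sub>v (K *\<^sub>v w)" unfolding Dbw by (rule mult_mat_vec[OF K w])
    finally show "(D1 + D2) *\<^sub>v (K *\<^sub>v w) = c \<cdot>\<^sub>v (K *\<^sub>v w)" .
  qed (use G x EK E K in \<open>simp_all flip: assoc_mult_mat_vec\<close>)
  moreover have "E' *\<^sub>v x \<in> eigen_sums (D1 + D2) E UNIV n"
  proof (rule eigen_sums_transfer)
    show "E' *\<^sub>v x \<in> eigen_sums D2 E' UNIV n"
      using sp2 c(1,2) x by (simp flip: assoc_mult_mat_vec)
    fix w c assume w: "w \<in> carrier_vec n" and E'w: "E' *\<^sub>v w = w" and D2w: "D2 *\<^sub>v w = c \<cdot>\<^sub>v w"
    have "D1 * E' = 0\<^sub>m n n"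
      unfolding D1_def using assoc_mult_mat[OF mult_carrier_mat[OF K Db] G c(1)] c(6) K Db by simp
    have "D1 *\<^sub>v w = (D1 * E') *\<^sub>v w" using assoc_mult_mat_vec[OF D1 c(1) w] E'w by simp
    also have "\<dots> = 0\<^sub>v n" unfolding \<open>D1 * E' = 0\<^sub>m n n\<close> using w by auto
    finally have "(D1 + D2) *\<^sub>v w = c \<cdot>\<^sub>v w" using add_mult_distrib_mat_vec[OF D1 D2 w] D2w w by simp
    moreover have "E *\<^sub>v w = w" using assoc_mult_mat_vec[OF E c(1) w] c(4) E'w by simp
    ultimately show "E *\<^sub>v w = w \<and> (D1 + D2) *\<^sub>v w = c \<cdot>\<^sub>v w" by simp
  qed
  moreover have "x = K *\<^sub>v (G *\<^sub>v x) + E' *\<^sub>v x"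
  proof -
    have "E = K * G + E'" unfolding E' using E K G by (intro eq_matI) auto
    hence "E *\<^sub>v x = K *\<^sub>v (G *\<^sub>v x) + E' *\<^sub>v x"
      using add_mult_distrib_mat_vec[OF mult_carrier_mat[OF K G] c(1) x] K G x by simp
    thus ?thesis using Ex by simp
  qed
  ultimately show ?thesis unfolding D1_def by (metis eigen_sums_add)
qed

text \<open>The two square-zero parts annihilate each other, being supported on complementary
  ranges.\<close>

lemma block_frame_square_zero:
  fixes A E :: "'a::field mat"
  assumes A: "A \<in> carrier_mat n n" and E: "E \<in> carrier_mat n n" and EE: "E * E = E"
    and EA: "E * A = A * E" and fr: "block_frame n k A E K G B" and E': "E' = E - K * G"
    and Mb: "Mb \<in> carrier_mat k k" and Mb2: "Mb * Mb = 0\<^sub>m k k"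
    and M2: "M2 \<in> carrier_mat n n" and M22: "M2 * M2 = 0\<^sub>m n n"
    and sup: "E' * M2 = M2" "M2 * E' = M2"
  shows "(K * Mb * G + M2) * (K * Mb * G + M2) = 0\<^sub>m n n"
proof -
  from fr have K: "K \<in> carrier_mat n k" and G: "G \<in> carrier_mat k n"
    unfolding block_frame_def by auto
  note sM = block_frame_sandwich[OF E fr Mb]
  note zM = block_frame_complement_supported[OF A E EE EA fr E' M2 sup]
  define M1 where "M1 = K * Mb * G"
  have M1: "M1 \<in> carrier_mat n n" unfolding M1_def using K G Mb by auto
  have "M1 * M1 = K * Mb * (Mb * G)"
    using assoc_mult_mat[OF mult_carrier_mat[OF K Mb] G M1] sM(1) unfolding M1_def by simp
  hence M11: "M1 * M1 = 0\<^sub>m n n"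
    using assoc_mult_mat[OF mult_carrier_mat[OF K Mb] Mb G] assoc_mult_mat[OF K Mb Mb] Mb2 K G by simp
  have M12: "M1 * M2 = 0\<^sub>m n n"
    using assoc_mult_mat[OF mult_carrier_mat[OF K Mb] G M2] zM(1) K Mb unfolding M1_def by simp
  have "M2 * M1 = (M2 * K) * Mb * G"
    using assoc_mult_mat[OF M2 mult_carrier_mat[OF K Mb] G] assoc_mult_mat[OF M2 K Mb]
    unfolding M1_def by simp
  hence M21: "M2 * M1 = 0\<^sub>m n n" unfolding zM(2) using Mb G by simp
  show ?thesis
    using add_mult_distrib_mat[OF M1 M2 add_carrier_mat[OF M2]] mult_add_distrib_mat[OF M1 M1 M2]
      mult_add_distrib_mat[OF M2 M1 M2] M11 M12 M21 M22 unfolding M1_def[symmetric] by simp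
qed

lemma range_split_extend:
  fixes A E :: "'a::field mat"
  assumes A: "A \<in> carrier_mat n n" and E: "E \<in> carrier_mat n n" and EE: "E * E = E"
    and EA: "E * A = A * E" and fr: "block_frame n k A E K G B" and E': "E' = E - K * G"
    and Db: "Db \<in> carrier_mat k k" and Mb: "Mb \<in> carrier_mat k k" and BDM: "B = Db + Mb"
    and Mb2: "Mb * Mb = 0\<^sub>m k k" and spDb: "\<forall>u \<in> carrier_vec k. u \<in> eigen_sums Db (1\<^sub>m k) UNIV k"
    and rs: "range_split n E' A D2 M2"
  shows "range_split n E A (K * Db * G + D2) (K * Mb * G + M2)"
proof -
  from fr have K: "K \<in> carrier_mat n k" and G: "G \<in> carrier_mat k n" and GA: "G * A = B * G"
    unfolding block_frame_def by auto
  note c = block_frame_complement[OF A E EE EA fr E']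
  from rs have D2: "D2 \<in> carrier_mat n n" and M2: "M2 \<in> carrier_mat n n" and E'A: "E' * A = D2 + M2"
    and M22: "M2 * M2 = 0\<^sub>m n n" and sup: "E' * D2 = D2" "D2 * E' = D2" "E' * M2 = M2" "M2 * E' = M2"
    unfolding range_split_def by auto
  note sD = block_frame_sandwich[OF E fr Db] and sM = block_frame_sandwich[OF E fr Mb]
  note zD = block_frame_complement_supported[OF A E EE EA fr E' D2 sup(1,2)]
  note zM = block_frame_complement_supported[OF A E EE EA fr E' M2 sup(3,4)]
  define D1 where "D1 = K * Db * G"
  define M1 where "M1 = K * Mb * G"
  have D1: "D1 \<in> carrier_mat n n" and M1: "M1 \<in> carrier_mat n n"
    unfolding D1_def M1_def using K G Db Mb by auto
  have "K * G * A = D1 + M1"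
  proof -
    have "K * G * A = K * (Db * G + Mb * G)"
      using assoc_mult_mat[OF K G A] GA add_mult_distrib_mat[OF Db Mb G] unfolding BDM by simp
    also have "\<dots> = D1 + M1" unfolding D1_def M1_def
      using mult_add_distrib_mat[OF K mult_carrier_mat[OF Db G] mult_carrier_mat[OF Mb G]]
        assoc_mult_mat[OF K Db G] assoc_mult_mat[OF K Mb G] by simp
    finally show ?thesis .
  qed
  moreover have "E = K * G + E'" unfolding E' using E K G by (intro eq_matI) auto
  ultimately have "E * A = (D1 + M1) + (D2 + M2)"
    using add_mult_distrib_mat[OF mult_carrier_mat[OF K G] c(1) A] E'A by simp
  also have "\<dots> = (D1 + D2) + (M1 + M2)" using D1 D2 M1 M2 by (intro eq_matI) auto
  finally have EAsum: "E * A = (D1 + D2) + (M1 + M2)" .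
  have "(M1 + M2) * (M1 + M2) = 0\<^sub>m n n"
    unfolding M1_def by (rule block_frame_square_zero[OF A E EE EA fr E' Mb Mb2 M2 M22 sup(3,4)])
  moreover have "E * (D1 + D2) = D1 + D2" "(D1 + D2) * E = D1 + D2"
    "E * (M1 + M2) = M1 + M2" "(M1 + M2) * E = M1 + M2"
    using mult_add_distrib_mat[OF E D1 D2] add_mult_distrib_mat[OF D1 D2 E]
      mult_add_distrib_mat[OF E M1 M2] add_mult_distrib_mat[OF M1 M2 E]
      sD(3,4) sM(3,4) zD(3,4) zM(3,4) unfolding D1_def M1_def by simp_all
  moreover have "\<forall>x \<in> carrier_vec n. E *\<^sub>v x = x \<longrightarrow> x \<in> eigen_sums (D1 + D2) E UNIV n"
    using range_split_extend_eigen_sums[OF A E EE EA fr E' Db spDb rs] unfolding D1_def by blast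
  ultimately show ?thesis using EAsum D1 D2 M1 M2 unfolding range_split_def D1_def M1_def by auto
qed

lemma range_split_exists:
  fixes A :: "'a::{finite,field} mat"
  assumes two: "(2::'a) \<noteq> 0" and q5: "card (UNIV :: 'a set) \<ge> 5" and A: "A \<in> carrier_mat n n"
  shows "E \<in> carrier_mat n n \<Longrightarrow> E * E = E \<Longrightarrow> E * A = A * E \<Longrightarrow> \<exists>D M. range_split n E A D M"
proof (induction "card ((\<lambda>x. E *\<^sub>v x) ` carrier_vec n)" arbitrary: E rule: less_induct)
  case less
  hence E: "E \<in> carrier_mat n n" and EE: "E * E = E" and EA: "E * A = A * E" by auto
  show ?case
  proof (cases "\<forall>x \<in> carrier_vec n. E *\<^sub>v x = 0\<^sub>v n")
    case True
    have "E = 0\<^sub>m n n"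
  proof (rule mat_col_eqI)
      fix j assume "j < dim_col (0\<^sub>m n n :: 'a mat)"
      hence j: "j < n" by simp
      thus "col E j = col (0\<^sub>m n n) j" using mult_unit_vec_eq_col[OF E j] True by simp
    qed (insert E, auto)
    thus ?thesis using range_split_zero[OF A] by blast
  next
    case False
    then obtain x0 where x0: "x0 \<in> carrier_vec n" "E *\<^sub>v x0 \<noteq> 0\<^sub>v n" by auto
    obtain k K G B cs where k1: "1 \<le> k" and fr: "block_frame n k A E K G B"
      and Bc: "B = companion_mat k cs \<or> B = transpose_mat (companion_mat k cs)"
      using companion_frame_exists[OF A E EE EA x0] by blast
    obtain Db Mb where Db: "Db \<in> carrier_mat k k" and Mb: "Mb \<in> carrier_mat k k" and BDM: "B = Db + Mb"
      and Mb2: "Mb * Mb = 0\<^sub>m k k" and spDb: "\<forall>u \<in> carrier_vec k. u \<in> eigen_sums Db (1\<^sub>m k) UNIV k"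
      using companion_block_split[OF two q5 k1 Bc] by blast
    define E' where "E' = E - K * G"
    note c = block_frame_complement[OF A E EE EA fr E'_def]
    obtain D2 M2 where "range_split n E' A D2 M2"
      using less.hyps[OF card_range_complement_less[OF A E EE EA fr k1 E'_def] c(1-3)] by blast
    from range_split_extend[OF A E EE EA fr E'_def Db Mb BDM Mb2 spDb this] show ?thesis by blast
  qed
qed

lemma pow_mult_eigenvector:
  fixes D :: "'a::field mat"
  assumes D: "D \<in> carrier_mat n n" and w: "w \<in> carrier_vec n" and Dw: "D *\<^sub>v w = c \<cdot>\<^sub>v w"
  shows "(D ^\<^sub>m j) *\<^sub>v w = c ^ j \<cdot>\<^sub>v w"
proof (induction j)
  case 0 thus ?case using D w by simp
next
  case (Suc j)
  have "(D ^\<^sub>m Suc j) *\<^sub>v w = (D ^\<^sub>m j) *\<^sub>v (D *\<^sub>v w)"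
    using assoc_mult_mat_vec[OF pow_carrier_mat[OF D] D w] by simp
  also have "\<dots> = c \<cdot>\<^sub>v ((D ^\<^sub>m j) *\<^sub>v w)" unfolding Dw by (rule mult_mat_vec[OF pow_carrier_mat[OF D] w])
  also have "\<dots> = c ^ Suc j \<cdot>\<^sub>v w" unfolding Suc using w by (intro eq_vecI, auto)
  finally show ?case .
qed

lemma pow_card_mult_eigen_sums:
  fixes D :: "'a::{finite,field} mat"
  assumes D: "D \<in> carrier_mat n n" and x: "x \<in> eigen_sums D E L n"
  shows "(D ^\<^sub>m card (UNIV :: 'a set)) *\<^sub>v x = D *\<^sub>v x"
  using x
proof (induction rule: eigen_sums.induct)
  case zero
  show ?case using D by auto
next
  case (add_eigenvector y w c)
  have yc: "y \<in> carrier_vec n" using eigen_sums_carrier[OF add_eigenvector.hyps(1)] .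
  let ?q = "card (UNIV :: 'a set)"
  have "(D ^\<^sub>m ?q) *\<^sub>v (w + y) = (D ^\<^sub>m ?q) *\<^sub>v w + (D ^\<^sub>m ?q) *\<^sub>v y"
    by (rule mult_add_distrib_mat_vec[OF pow_carrier_mat[OF D] add_eigenvector.hyps(2) yc])
  also have "(D ^\<^sub>m ?q) *\<^sub>v w = D *\<^sub>v w"
    using pow_mult_eigenvector[OF D add_eigenvector.hyps(2,5)] add_eigenvector.hyps(5)
      finite_field_pow_card[of c] by simp
  also have "D *\<^sub>v w + (D ^\<^sub>m ?q) *\<^sub>v y = D *\<^sub>v (w + y)"
    unfolding add_eigenvector.IH by (rule mult_add_distrib_mat_vec[OF D add_eigenvector.hyps(2) yc, symmetric])
  finally show ?case .
qed

lemma pow_card_eq_if_eigen_sums: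
  fixes D :: "'a::{finite,field} mat"
  assumes D: "D \<in> carrier_mat n n" and sp: "\<And>x. x \<in> carrier_vec n \<Longrightarrow> x \<in> eigen_sums D E L n"
  shows "D ^\<^sub>m card (UNIV :: 'a set) = D"
proof (rule mat_col_eqI)
  fix j assume "j < dim_col D"
  hence j: "j < n" using D by simp
  have "col (D ^\<^sub>m card (UNIV :: 'a set)) j = (D ^\<^sub>m card (UNIV :: 'a set)) *\<^sub>v unit_vec n j"
    by (rule mult_unit_vec_eq_col[OF pow_carrier_mat[OF D] j, symmetric])
  also have "\<dots> = D *\<^sub>v unit_vec n j" by (rule pow_card_mult_eigen_sums[OF D sp], simp)
  also have "\<dots> = col D j" by (rule mult_unit_vec_eq_col[OF D j])
  finally show "col (D ^\<^sub>m card (UNIV :: 'a set)) j = col D j" .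
qed (insert D, auto)

theorem theorem2p2:
  fixes A :: "'a :: {finite, field} mat" and n :: nat
  assumes "odd (card (UNIV :: 'a set))" and "card (UNIV :: 'a set) \<ge> 5"
    and "n \<ge> 1" and "A \<in> carrier_mat n n"
  shows "\<exists>D M. D \<in> carrier_mat n n \<and> M \<in> carrier_mat n n \<and> A = D + M \<and>
              diagonalizable_mat n D \<and> M * M = 0\<^sub>m n n \<and>
              D ^\<^sub>m card (UNIV :: 'a set) = D"
proof -
  have A: "A \<in> carrier_mat n n" by fact
  obtain D M where "range_split n (1\<^sub>m n) A D M"
    using range_split_exists[OF two_neq_zero_if_odd_card[OF assms(1)] assms(2) A, of "1\<^sub>m n"] A by auto
  hence D: "D \<in> carrier_mat n n" and M: "M \<in> carrier_mat n n" and "A = D + M" and "M * M = 0\<^sub>m n n"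
    and sp: "\<And>x. x \<in> carrier_vec n \<Longrightarrow> x \<in> eigen_sums D (1\<^sub>m n) UNIV n"
    unfolding range_split_def using A by auto
  moreover have "diagonalizable_mat n D" by (rule diagonalizable_if_eigen_sums[OF D sp])
  moreover have "D ^\<^sub>m card (UNIV :: 'a set) = D" by (rule pow_card_eq_if_eigen_sums[OF D sp])
  ultimately show ?thesis by blast
qed

end
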